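(* Let $\eta>0$, $\alpha\in(1/2,1)$, $\eta_i=\eta i^{-\alpha}$, let $e_i$ be i.i.d. with $\mathbb{E}e_i=0$ and $\mathbb{E}e_i^4<\infty$, and let $X_0=x_0=0$, $X_i=(1-\eta_i)X_{i-1}+\eta_ie_i$ for $i\ge1$. Let $\ell_i=\lfloor Ci^{\alpha}\log i\rfloor$ with $\eta C>1$, $t_i=i-\ell_i+1$, $W_i=\sum_{j=t_i}^{i-1}X_j$, $$\widehat\sigma_n=\frac1n\sum_{i=1}^n\big[X_i^2+2X_iW_i\big],\qquad\sigma_n=\mathrm{Var}(\sqrt n\,\bar X_n),\ \bar X_n=n^{-1}\textstyle\sum_{i=1}^nX_i.$$ Then $\mathbb{E}[(\widehat\sigma_n-\sigma_n)^2]\lesssim n^{-1+\alpha}\log n$.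
   Context: $a_n\lesssim b_n$ means $a_n\le Cb_n$ with $C$ independent of $n$. *)

theory Defs
  imports "HOL-Probability.Probability"
begin

definition step :: "real \<Rightarrow> real \<Rightarrow> nat \<Rightarrow> real" where
  "step \<eta> \<alpha> i = \<eta> * real i powr (- \<alpha>)"

fun Xseq :: "real \<Rightarrow> real \<Rightarrow> (nat \<Rightarrow> 'a \<Rightarrow> real) \<Rightarrow> nat \<Rightarrow> 'a \<Rightarrow> real" where
  "Xseq \<eta> \<alpha> e 0 \<omega> = 0"
| "Xseq \<eta> \<alpha> e (Suc i) \<omega> =
     (1 - step \<eta> \<alpha> (Suc i)) * Xseq \<eta> \<alpha> e i \<omega> + step \<eta> \<alpha> (Suc i) * e (Suc i) \<omega>"

definition blen :: "real \<Rightarrow> real \<Rightarrow> nat \<Rightarrow> nat" where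
  "blen C \<alpha> i = nat \<lfloor>C * real i powr \<alpha> * ln (real i)\<rfloor>"

text \<open>W_i = sum_{j = t_i}^{i-1} X_j with t_i = i - ell_i + 1; indices below 0 are
  truncated (X_0 = 0, so including index 0 is harmless).\<close>
definition Wsum :: "real \<Rightarrow> real \<Rightarrow> real \<Rightarrow> (nat \<Rightarrow> 'a \<Rightarrow> real) \<Rightarrow> nat \<Rightarrow> 'a \<Rightarrow> real" where
  "Wsum \<eta> \<alpha> C e i \<omega> = (\<Sum>j\<in>{i + 1 - blen C \<alpha> i ..< i}. Xseq \<eta> \<alpha> e j \<omega>)"

definition sigma_hat :: "real \<Rightarrow> real \<Rightarrow> real \<Rightarrow> (nat \<Rightarrow> 'a \<Rightarrow> real) \<Rightarrow> nat \<Rightarrow> 'a \<Rightarrow> real" where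
  "sigma_hat \<eta> \<alpha> C e n \<omega> = (1 / real n) *
     (\<Sum>i=1..n. (Xseq \<eta> \<alpha> e i \<omega>)\<^sup>2 + 2 * Xseq \<eta> \<alpha> e i \<omega> * Wsum \<eta> \<alpha> C e i \<omega>)"

definition Xbar :: "real \<Rightarrow> real \<Rightarrow> (nat \<Rightarrow> 'a \<Rightarrow> real) \<Rightarrow> nat \<Rightarrow> 'a \<Rightarrow> real" where
  "Xbar \<eta> \<alpha> e n \<omega> = (1 / real n) * (\<Sum>i=1..n. Xseq \<eta> \<alpha> e i \<omega>)"

end

theory Submission
  imports Defs "HOL-Real_Asymp.Real_Asymp"
begin

(*
  Unrolling the recursion gives X_i = sum_k a(i,k) e_k with
  a(i,k) = eta_k prod_{k<m<=i} (1 - eta_m), which up to a constant factor is dominated by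
  p(i,k) = eta_k exp (-(eta_{k+1} + ... + eta_i)); the row and the column sums of p are bounded.
  Hence sigma_hat_n is a quadratic form sum_{k,l} Q(k,l) e_k e_l in the noise, and
  sigma_n = mu_2 sum_k v_k^2 where v_k is a scaled column sum of a. For i.i.d. centred noise with
  four moments, the mean squared error of a quadratic form is its squared bias
  (mu_2 tr Q - sigma_n)^2 plus a fluctuation of the order of the squared Frobenius norm of Q.
  Schur's test bounds the latter by n^-1 sum_i (1 + l_i), i.e. by n^(alpha-1) log n.
  By symmetry of the covariances, the bias is n^-1 times the sum of the covariances of the pairs
  j < i outside the window; these decay like exp (-(i-j) eta_i), and as l_i eta_i is about
  eta C log i with eta C > 1, each row contributes O(i^(alpha-1)), so the bias is O(n^(alpha-1)).
*)

lemma sum_le_sum_of_vanishing_outside: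
  fixes f :: "'b \<Rightarrow> real"
  assumes "finite A" "finite B" "\<And>k. k \<notin> B \<Longrightarrow> f k = 0" "\<And>k. 0 \<le> f k"
  shows "sum f A \<le> sum f B"
proof -
  have "sum f A = sum f (A \<inter> B)"
    by (rule sum.mono_neutral_right) (use assms in auto)
  also have "\<dots> \<le> sum f B"
    by (rule sum_mono2) (use assms in auto)
  finally show ?thesis .
qed

lemma sum_power_le_geometric_tail:
  fixes r :: real
  assumes "0 \<le> r" "r < 1" "finite A" "\<And>j. j \<in> A \<Longrightarrow> L \<le> j"
  shows "(\<Sum>j\<in>A. r ^ j) \<le> r ^ L / (1 - r)"
proof -
  have summable: "summable (\<lambda>d. r ^ L * r ^ d)"
    using assms by (intro summable_mult summable_geometric) simp
  have "(\<Sum>j\<in>A. r ^ j) = (\<Sum>d\<in>(\<lambda>j. j - L) ` A. r ^ L * r ^ d)"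
    using assms(4) by (subst sum.reindex)
      (auto simp: inj_on_diff_nat power_add[symmetric] intro!: sum.cong)
  also have "\<dots> \<le> (\<Sum>d. r ^ L * r ^ d)"
    using assms summable by (intro sum_le_suminf) auto
  also have "\<dots> = r ^ L / (1 - r)"
    using assms by (simp add: suminf_mult suminf_geometric summable_geometric)
  finally show ?thesis .
qed

lemma sum_powr_le_integral:
  fixes \<alpha> :: real
  assumes "0 < \<alpha>" "\<alpha> \<le> 1"
  shows "(\<Sum>i\<in>{1..n}. real i powr (\<alpha> - 1)) \<le> real n powr \<alpha> / \<alpha>"
proof (induction n)
  case 0 then show ?case by simp
next
  case (Suc n)
  have "\<alpha> * real (Suc n) powr (\<alpha> - 1) \<le> real (Suc n) powr \<alpha> - real n powr \<alpha>"
  proof (cases "n = 0")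
    case True then show ?thesis using assms by simp
  next
    case False
    have "\<exists>z>real n. z < real (Suc n) \<and>
        real (Suc n) powr \<alpha> - real n powr \<alpha> = (real (Suc n) - real n) * (\<alpha> * z powr (\<alpha> - 1))"
      by (rule MVT2) (use False in \<open>auto intro!: has_real_derivative_powr\<close>)
    then obtain z where z: "real n < z" "z < real (Suc n)"
      and mvt: "real (Suc n) powr \<alpha> - real n powr \<alpha> = \<alpha> * z powr (\<alpha> - 1)"
      by auto
    have "real (Suc n) powr (\<alpha> - 1) \<le> z powr (\<alpha> - 1)"
      by (rule powr_mono2') (use z False assms in auto)
    then show ?thesis unfolding mvt using assms by (intro mult_left_mono) auto
  qed
  then have "real (Suc n) powr (\<alpha> - 1) \<le> (real (Suc n) powr \<alpha> - real n powr \<alpha>) / \<alpha>"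
    using assms by (simp add: pos_le_divide_eq mult.commute)
  then show ?case using Suc by (simp add: diff_divide_distrib)
qed

lemma weighted_Cauchy_Schwarz_sum:
  fixes w x :: "'b \<Rightarrow> real"
  assumes "\<And>i. i \<in> I \<Longrightarrow> 0 \<le> w i"
  shows "(\<Sum>i\<in>I. w i * x i)\<^sup>2 \<le> (\<Sum>i\<in>I. w i) * (\<Sum>i\<in>I. w i * (x i)\<^sup>2)"
proof -
  have "(\<Sum>i\<in>I. w i * x i)\<^sup>2 = (\<Sum>i\<in>I. sqrt (w i) * (sqrt (w i) * x i))\<^sup>2"
    by (rule arg_cong[where f = "\<lambda>t. t\<^sup>2"], rule sum.cong)
       (auto simp: assms mult.assoc[symmetric])
  also have "\<dots> \<le> (\<Sum>i\<in>I. (sqrt (w i))\<^sup>2) * (\<Sum>i\<in>I. (sqrt (w i) * x i)\<^sup>2)"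
    by (rule Cauchy_Schwarz_ineq_sum)
  also have "\<dots> = (\<Sum>i\<in>I. w i) * (\<Sum>i\<in>I. w i * (x i)\<^sup>2)"
    using assms by (simp add: power_mult_distrib)
  finally show ?thesis .
qed

lemma Schur_test_sum:
  fixes A :: "'b \<Rightarrow> 'c \<Rightarrow> real" and v :: "'b \<Rightarrow> real"
  assumes nonneg: "\<And>i k. 0 \<le> A i k"
    and row: "\<And>i. i \<in> I \<Longrightarrow> (\<Sum>k\<in>K. A i k) \<le> R"
    and col: "\<And>k. k \<in> K \<Longrightarrow> (\<Sum>i\<in>I. A i k) \<le> R'" and "0 \<le> R'"
  shows "(\<Sum>k\<in>K. (\<Sum>i\<in>I. A i k * v i)\<^sup>2) \<le> R * R' * (\<Sum>i\<in>I. (v i)\<^sup>2)"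
proof -
  have "(\<Sum>k\<in>K. (\<Sum>i\<in>I. A i k * v i)\<^sup>2) \<le> (\<Sum>k\<in>K. R' * (\<Sum>i\<in>I. A i k * (v i)\<^sup>2))"
  proof (rule sum_mono)
    fix k assume k: "k \<in> K"
    have "(\<Sum>i\<in>I. A i k * v i)\<^sup>2 \<le> (\<Sum>i\<in>I. A i k) * (\<Sum>i\<in>I. A i k * (v i)\<^sup>2)"
      by (rule weighted_Cauchy_Schwarz_sum) (rule nonneg)
    also have "\<dots> \<le> R' * (\<Sum>i\<in>I. A i k * (v i)\<^sup>2)"
      by (rule mult_right_mono[OF col[OF k]]) (simp add: nonneg sum_nonneg)
    finally show "(\<Sum>i\<in>I. A i k * v i)\<^sup>2 \<le> R' * (\<Sum>i\<in>I. A i k * (v i)\<^sup>2)" .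
  qed
  also have "\<dots> = R' * (\<Sum>k\<in>K. \<Sum>i\<in>I. A i k * (v i)\<^sup>2)"
    by (simp add: sum_distrib_left)
  also have "(\<Sum>k\<in>K. \<Sum>i\<in>I. A i k * (v i)\<^sup>2) = (\<Sum>i\<in>I. (\<Sum>k\<in>K. A i k) * (v i)\<^sup>2)"
    by (subst sum.swap) (simp add: sum_distrib_right)
  also have "R' * \<dots> \<le> R' * (\<Sum>i\<in>I. R * (v i)\<^sup>2)"
    by (intro mult_left_mono sum_mono \<open>0 \<le> R'\<close>) (auto intro: mult_right_mono row)
  also have "\<dots> = R * R' * (\<Sum>i\<in>I. (v i)\<^sup>2)"
    by (simp add: sum_distrib_left sum_distrib_right mult_ac)
  finally show ?thesis .
qed

lemma sum_mult_transpose_le_sum_squares: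
  fixes f :: "'b \<Rightarrow> 'b \<Rightarrow> real"
  shows "(\<Sum>k\<in>A. \<Sum>l\<in>A. f k l * f l k) \<le> (\<Sum>k\<in>A. \<Sum>l\<in>A. (f k l)\<^sup>2)"
proof -
  have am_gm: "2 * (a * b) \<le> a\<^sup>2 + b\<^sup>2" for a b :: real
    using sum_squares_bound[of a b] by simp
  have "2 * (\<Sum>k\<in>A. \<Sum>l\<in>A. f k l * f l k) \<le> (\<Sum>k\<in>A. \<Sum>l\<in>A. (f k l)\<^sup>2 + (f l k)\<^sup>2)"
    unfolding sum_distrib_left
    by (intro sum_mono am_gm)
  also have "\<dots> = (\<Sum>k\<in>A. \<Sum>l\<in>A. (f k l)\<^sup>2) + (\<Sum>k\<in>A. \<Sum>l\<in>A. (f l k)\<^sup>2)"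
    by (simp add: sum.distrib)
  also have "(\<Sum>k\<in>A. \<Sum>l\<in>A. (f l k)\<^sup>2) = (\<Sum>k\<in>A. \<Sum>l\<in>A. (f k l)\<^sup>2)"
    by (rule sum.swap)
  finally show ?thesis by simp
qed

lemma sum_diag_squares_le_sum_squares:
  fixes f :: "'b \<Rightarrow> 'b \<Rightarrow> real"
  shows "finite A \<Longrightarrow> (\<Sum>k\<in>A. (f k k)\<^sup>2) \<le> (\<Sum>k\<in>A. \<Sum>l\<in>A. (f k l)\<^sup>2)"
  by (intro sum_mono member_le_sum) auto

lemma sum_shifted_power_le:
  fixes r :: real
  assumes "0 \<le> r" "r < 1" "finite A"
  shows "(\<Sum>i\<in>A. if k \<le> i then r ^ (i - k) else 0) \<le> 1 / (1 - r)"
proof -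
  have "(\<Sum>i\<in>A. if k \<le> i then r ^ (i - k) else 0) = (\<Sum>i\<in>{i\<in>A. k \<le> i}. r ^ (i - k))"
    using assms by (simp add: sum.inter_filter)
  also have "\<dots> = (\<Sum>d\<in>(\<lambda>i. i - k) ` {i\<in>A. k \<le> i}. r ^ d)"
    by (subst sum.reindex) (auto intro: inj_on_diff_nat)
  also have "\<dots> \<le> r ^ 0 / (1 - r)"
    using assms by (intro sum_power_le_geometric_tail) auto
  finally show ?thesis by simp
qed

lemma sum_sum_eq_if_symmetrizations_eq:
  fixes f g :: "'b \<Rightarrow> 'b \<Rightarrow> real"
  assumes "\<And>i j. i \<in> A \<Longrightarrow> j \<in> A \<Longrightarrow> f i j + f j i = g i j + g j i"
  shows "(\<Sum>i\<in>A. \<Sum>j\<in>A. f i j) = (\<Sum>i\<in>A. \<Sum>j\<in>A. g i j)"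
proof -
  have twice: "2 * (\<Sum>i\<in>A. \<Sum>j\<in>A. h i j) = (\<Sum>i\<in>A. \<Sum>j\<in>A. h i j + h j i)" for h :: "'b \<Rightarrow> 'b \<Rightarrow> real"
    using sum.swap[of h A A] by (simp add: sum.distrib)
  have "2 * (\<Sum>i\<in>A. \<Sum>j\<in>A. f i j) = 2 * (\<Sum>i\<in>A. \<Sum>j\<in>A. g i j)"
    unfolding twice using assms by (intro sum.cong) auto
  then show ?thesis by simp
qed

lemma sum_sum_swap_pairs:
  fixes F :: "'b \<Rightarrow> 'b \<Rightarrow> 'b \<Rightarrow> 'b \<Rightarrow> real"
  shows "(\<Sum>i\<in>A. \<Sum>j\<in>A. \<Sum>k\<in>A. \<Sum>l\<in>A. F i j k l) = (\<Sum>k\<in>A. \<Sum>l\<in>A. \<Sum>i\<in>A. \<Sum>j\<in>A. F i j k l)"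
proof -
  have "(\<Sum>i\<in>A. \<Sum>j\<in>A. \<Sum>k\<in>A. \<Sum>l\<in>A. F i j k l) = (\<Sum>i\<in>A. \<Sum>k\<in>A. \<Sum>j\<in>A. \<Sum>l\<in>A. F i j k l)"
    by (rule sum.cong[OF refl], rule sum.swap)
  also have "\<dots> = (\<Sum>i\<in>A. \<Sum>k\<in>A. \<Sum>l\<in>A. \<Sum>j\<in>A. F i j k l)"
    by (rule sum.cong[OF refl], rule sum.cong[OF refl], rule sum.swap)
  also have "\<dots> = (\<Sum>k\<in>A. \<Sum>i\<in>A. \<Sum>l\<in>A. \<Sum>j\<in>A. F i j k l)"
    by (rule sum.swap)
  also have "\<dots> = (\<Sum>k\<in>A. \<Sum>l\<in>A. \<Sum>i\<in>A. \<Sum>j\<in>A. F i j k l)"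
    by (rule sum.cong[OF refl], rule sum.swap)
  finally show ?thesis .
qed

lemma sum_of_bool_diag:
  fixes f :: "'b \<Rightarrow> 'b \<Rightarrow> real"
  assumes "finite A"
  shows "(\<Sum>k\<in>A. \<Sum>l\<in>A. of_bool (k = l) * f k l) = (\<Sum>k\<in>A. f k k)"
proof (rule sum.cong)
  fix k assume "k \<in> A"
  then show "(\<Sum>l\<in>A. of_bool (k = l) * f k l) = f k k"
    using assms by simp
qed simp

lemma sum_of_bool_point:
  fixes g :: "'b \<Rightarrow> 'b \<Rightarrow> real"
  assumes "finite A" "k \<in> A" "l \<in> A"
  shows "(\<Sum>k'\<in>A. \<Sum>l'\<in>A. of_bool (k' = k \<and> l' = l) * g k' l') = g k l"
proof -
  have "(\<Sum>l'\<in>A. of_bool (k' = k \<and> l' = l) * g k' l') = of_bool (k' = k) * g k' l" for k'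
    using assms by (cases "k' = k") simp_all
  then have "(\<Sum>k'\<in>A. \<Sum>l'\<in>A. of_bool (k' = k \<and> l' = l) * g k' l') = (\<Sum>k'\<in>A. of_bool (k' = k) * g k' l)"
    by simp
  also have "\<dots> = g k l" using assms by simp
  finally show ?thesis .
qed

text \<open>The four ways in which the index pattern \<open>(k, l, k', l')\<close> of a fourth moment can pair up.\<close>

lemma sum_pairing_trace_sq:
  fixes q :: "'b \<Rightarrow> 'b \<Rightarrow> real" assumes A: "finite A"
  shows "(\<Sum>k\<in>A. \<Sum>l\<in>A. \<Sum>k'\<in>A. \<Sum>l'\<in>A. q k l * q k' l' * of_bool (k = l \<and> k' = l'))
    = (\<Sum>k\<in>A. q k k)\<^sup>2"
proof -
  have "(\<Sum>k\<in>A. \<Sum>l\<in>A. \<Sum>k'\<in>A. \<Sum>l'\<in>A. q k l * q k' l' * of_bool (k = l \<and> k' = l'))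
      = (\<Sum>k\<in>A. \<Sum>l\<in>A. \<Sum>k'\<in>A. \<Sum>l'\<in>A. (of_bool (k = l) * q k l) * (of_bool (k' = l') * q k' l'))"
    by (intro sum.cong refl) (simp add: of_bool_def)
  also have "\<dots> = (\<Sum>k\<in>A. \<Sum>l\<in>A. of_bool (k = l) * q k l * (\<Sum>k'\<in>A. \<Sum>l'\<in>A. of_bool (k' = l') * q k' l'))"
    by (simp only: sum_distrib_left[symmetric])
  also have "\<dots> = (\<Sum>k\<in>A. \<Sum>l\<in>A. of_bool (k = l) * q k l) * (\<Sum>k'\<in>A. \<Sum>l'\<in>A. of_bool (k' = l') * q k' l')"
    by (simp only: sum_distrib_right[symmetric])
  also have "\<dots> = (\<Sum>k\<in>A. q k k)\<^sup>2" using sum_of_bool_diag[OF A, of q] by (simp add: power2_eq_square)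
  finally show ?thesis .
qed

lemma sum_pairing_frobenius:
  fixes q :: "'b \<Rightarrow> 'b \<Rightarrow> real" assumes A: "finite A"
  shows "(\<Sum>k\<in>A. \<Sum>l\<in>A. \<Sum>k'\<in>A. \<Sum>l'\<in>A. q k l * q k' l' * of_bool (k = k' \<and> l = l'))
    = (\<Sum>k\<in>A. \<Sum>l\<in>A. (q k l)\<^sup>2)"
proof -
  have "(\<Sum>k\<in>A. \<Sum>l\<in>A. \<Sum>k'\<in>A. \<Sum>l'\<in>A. q k l * q k' l' * of_bool (k = k' \<and> l = l'))
      = (\<Sum>k\<in>A. \<Sum>l\<in>A. \<Sum>k'\<in>A. \<Sum>l'\<in>A. q k l * (of_bool (k' = k \<and> l' = l) * q k' l'))"
    by (intro sum.cong refl) (auto simp: of_bool_def)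
  also have "\<dots> = (\<Sum>k\<in>A. \<Sum>l\<in>A. q k l * (\<Sum>k'\<in>A. \<Sum>l'\<in>A. of_bool (k' = k \<and> l' = l) * q k' l'))"
    by (simp only: sum_distrib_left[symmetric])
  also have "\<dots> = (\<Sum>k\<in>A. \<Sum>l\<in>A. (q k l)\<^sup>2)"
    by (intro sum.cong refl) (simp add: sum_of_bool_point[OF A] power2_eq_square)
  finally show ?thesis .
qed

lemma sum_pairing_transpose:
  fixes q :: "'b \<Rightarrow> 'b \<Rightarrow> real" assumes A: "finite A"
  shows "(\<Sum>k\<in>A. \<Sum>l\<in>A. \<Sum>k'\<in>A. \<Sum>l'\<in>A. q k l * q k' l' * of_bool (k = l' \<and> l = k'))
    = (\<Sum>k\<in>A. \<Sum>l\<in>A. q k l * q l k)"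
proof -
  have "(\<Sum>k\<in>A. \<Sum>l\<in>A. \<Sum>k'\<in>A. \<Sum>l'\<in>A. q k l * q k' l' * of_bool (k = l' \<and> l = k'))
      = (\<Sum>k\<in>A. \<Sum>l\<in>A. \<Sum>k'\<in>A. \<Sum>l'\<in>A. q k l * (of_bool (k' = l \<and> l' = k) * q k' l'))"
    by (intro sum.cong refl) (auto simp: of_bool_def)
  also have "\<dots> = (\<Sum>k\<in>A. \<Sum>l\<in>A. q k l * (\<Sum>k'\<in>A. \<Sum>l'\<in>A. of_bool (k' = l \<and> l' = k) * q k' l'))"
    by (simp only: sum_distrib_left[symmetric])
  also have "\<dots> = (\<Sum>k\<in>A. \<Sum>l\<in>A. q k l * q l k)"
    by (intro sum.cong refl) (simp add: sum_of_bool_point[OF A])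
  finally show ?thesis .
qed

lemma sum_pairing_diag:
  fixes q :: "'b \<Rightarrow> 'b \<Rightarrow> real" assumes A: "finite A"
  shows "(\<Sum>k\<in>A. \<Sum>l\<in>A. \<Sum>k'\<in>A. \<Sum>l'\<in>A. q k l * q k' l' * of_bool (k = l \<and> k = k' \<and> k = l'))
    = (\<Sum>k\<in>A. (q k k)\<^sup>2)"
proof -
  have "(\<Sum>k\<in>A. \<Sum>l\<in>A. \<Sum>k'\<in>A. \<Sum>l'\<in>A. q k l * q k' l' * of_bool (k = l \<and> k = k' \<and> k = l'))
      = (\<Sum>k\<in>A. \<Sum>l\<in>A. \<Sum>k'\<in>A. \<Sum>l'\<in>A. of_bool (k = l) * q k l * (of_bool (k' = k \<and> l' = k) * q k' l'))"
    by (intro sum.cong refl) (auto simp: of_bool_def)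
  also have "\<dots> = (\<Sum>k\<in>A. \<Sum>l\<in>A. of_bool (k = l) * q k l * (\<Sum>k'\<in>A. \<Sum>l'\<in>A. of_bool (k' = k \<and> l' = k) * q k' l'))"
    by (simp only: sum_distrib_left[symmetric])
  also have "\<dots> = (\<Sum>k\<in>A. \<Sum>l\<in>A. of_bool (k = l) * (q k l * q k k))"
    by (intro sum.cong refl) (simp add: sum_of_bool_point[OF A] mult.assoc)
  also have "\<dots> = (\<Sum>k\<in>A. (q k k)\<^sup>2)" using sum_of_bool_diag[OF A, of "\<lambda>k l. q k l * q k k"]
    by (simp add: power2_eq_square)
  finally show ?thesis .
qed

lemma abs_power_le_one_plus_power4: "m \<le> 4 \<Longrightarrow> \<bar>(x::real) ^ m\<bar> \<le> 1 + x ^ 4"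
proof (cases "\<bar>x\<bar> \<le> 1")
  case True
  then have "\<bar>x\<bar> ^ m \<le> 1" by (simp add: power_le_one)
  then show ?thesis by (simp add: power_abs zero_le_even_power add_increasing2)
next
  case False
  assume "m \<le> 4"
  then have "\<bar>x\<bar> ^ m \<le> \<bar>x\<bar> ^ 4" using False by (intro power_increasing) auto
  then show ?thesis by (simp add: power_abs power_even_abs_numeral)
qed

lemma prod4_eq_prod_multiplicity:
  fixes x :: "'b \<Rightarrow> real"
  shows "x k * x l * x k' * x l'
    = (\<Prod>i\<in>{k, l, k', l'}. x i ^ (of_bool (i = k) + of_bool (i = l) + of_bool (i = k') + of_bool (i = l')))"
  by (cases "k = l"; cases "k = k'"; cases "k = l'"; cases "l = k'"; cases "l = l'"; cases "k' = l'")
     (auto simp: power2_eq_square eval_nat_numeral mult_ac insert_commute)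

lemma prod_multiplicity_centered_moments:
  fixes \<mu> :: "nat \<Rightarrow> real"
  assumes "\<mu> 0 = 1" "\<mu> 1 = 0"
  shows "(\<Prod>i\<in>{k, l, k', l'}. \<mu> (of_bool (i = k) + of_bool (i = l) + of_bool (i = k') + of_bool (i = l')))
     = (\<mu> 2)\<^sup>2 * (of_bool (k = l \<and> k' = l') + of_bool (k = k' \<and> l = l') + of_bool (k = l' \<and> l = k'))
       + (\<mu> 4 - 3 * (\<mu> 2)\<^sup>2) * of_bool (k = l \<and> k = k' \<and> k = l')"
  using assms
  by (cases "k = l"; cases "k = k'"; cases "k = l'"; cases "l = k'"; cases "l = l'"; cases "k' = l'")
     (auto simp: power2_eq_square eval_nat_numeral mult_ac insert_commute)

lemma rate_terms_le:
  fixes \<alpha> :: real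
  assumes n: "2 \<le> n" and \<alpha>: "0 < \<alpha>" "\<alpha> < 1"
  shows "(real n powr (\<alpha> - 1))\<^sup>2 \<le> real n powr (\<alpha> - 1) * ln (real n) / ln 2"
    and "1 / real n \<le> real n powr (\<alpha> - 1) * ln (real n) / ln 2"
proof -
  define P where "P = real n powr (\<alpha> - 1)"
  have "real n powr (\<alpha> - 1) \<le> real n powr 0"
    using n \<alpha> by (intro powr_mono) auto
  then have P: "0 < P" "P \<le> 1" unfolding P_def using n by auto
  have "P \<le> P * (ln (real n) / ln 2)"
    using P n by (intro mult_le_cancel_left1[THEN iffD2]) (simp add: le_divide_eq)
  then have P_le: "P \<le> P * ln (real n) / ln 2" by simp
  show "(real n powr (\<alpha> - 1))\<^sup>2 \<le> real n powr (\<alpha> - 1) * ln (real n) / ln 2"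
    using P P_le mult_left_le[of P P] unfolding P_def[symmetric] power2_eq_square by linarith
  have "1 / real n = real n powr (-1)"
    using n by (simp add: powr_minus divide_inverse)
  also have "\<dots> \<le> P"
    unfolding P_def using n \<alpha> by (intro powr_mono) auto
  finally show "1 / real n \<le> real n powr (\<alpha> - 1) * ln (real n) / ln 2"
    using P_le unfolding P_def by linarith
qed

section \<open>The step-size schedule and the kernel of the recursion\<close>

locale sgd_schedule =
  fixes \<eta> \<alpha> C :: real
  assumes eta_pos: "\<eta> > 0" and alpha_gt_half: "1/2 < \<alpha>" and alpha_lt_one: "\<alpha> < 1"
    and eta_C_gt_one: "\<eta> * C > 1"
begin

abbreviation s :: "nat \<Rightarrow> real" where "s m \<equiv> step \<eta> \<alpha> m"

lemma C_pos: "C > 0"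
  using zero_less_mult_pos[of \<eta> C] eta_pos eta_C_gt_one by simp

lemma step_eq: "s m = \<eta> * real m powr (-\<alpha>)"
  by (simp add: step_def)

lemma step_nonneg: "0 \<le> s m"
  using eta_pos by (simp add: step_def)

lemma step_pos: "1 \<le> m \<Longrightarrow> 0 < s m"
  using eta_pos by (simp add: step_def)

lemma step_antimono: "1 \<le> m \<Longrightarrow> m \<le> m' \<Longrightarrow> s m' \<le> s m"
proof -
  assume m: "1 \<le> m" "m \<le> m'"
  have "real m' powr (-\<alpha>) \<le> real m powr (-\<alpha>)"
    by (rule powr_mono2') (use m alpha_gt_half in auto)
  then show ?thesis using eta_pos by (simp add: step_def)
qed

lemma step_le_eta: "1 \<le> m \<Longrightarrow> s m \<le> \<eta>"
  using step_antimono[of 1 m] by (simp add: step_def)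

lemma step_le_one: "\<eta> powr (1/\<alpha>) \<le> real m \<Longrightarrow> s m \<le> 1"
proof -
  assume m: "\<eta> powr (1/\<alpha>) \<le> real m"
  have "\<eta> = (\<eta> powr (1/\<alpha>)) powr \<alpha>"
    using eta_pos alpha_gt_half by (simp add: powr_powr)
  also have "\<dots> \<le> real m powr \<alpha>"
    by (rule powr_mono2) (use m alpha_gt_half in auto)
  finally have "\<eta> \<le> real m powr \<alpha>" .
  moreover have "real m > 0"
    using m eta_pos powr_gt_zero[of \<eta> "1/\<alpha>"] by linarith
  ultimately show ?thesis by (simp add: step_def powr_minus divide_inverse[symmetric])
qed

lemma half_step_le_step_double: "1 \<le> k \<Longrightarrow> s k / 2 \<le> s (2 * k)"
proof -
  assume k: "1 \<le> k"
  have "(2::real) powr (-1) \<le> 2 powr (-\<alpha>)"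
    by (rule powr_mono) (use alpha_lt_one in auto)
  then have "1 \<le> 2 * 2 powr (-\<alpha>)" by (simp add: powr_minus)
  from mult_right_mono[OF this, of "\<eta> * real k powr (-\<alpha>)"]
  have "s k \<le> 2 * (\<eta> * (2 powr (-\<alpha>) * real k powr (-\<alpha>)))"
    using eta_pos by (simp add: step_def mult_ac)
  then show ?thesis by (simp add: step_def powr_mult)
qed

definition cumstep :: "nat \<Rightarrow> real" where
  "cumstep i = (\<Sum>m\<in>{1..i}. s m)"

lemma cumstep_diff: "k \<le> i \<Longrightarrow> cumstep i - cumstep k = (\<Sum>m\<in>{k<..i}. s m)"
proof -
  assume "k \<le> i"
  then have "{1..i} = {1..k} \<union> {k<..i}" "{1..k} \<inter> {k<..i} = {}" by auto
  then show ?thesis unfolding cumstep_def by (simp add: sum.union_disjoint)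
qed

lemma cumstep_Suc: "cumstep (Suc i) = cumstep i + s (Suc i)"
  unfolding cumstep_def by simp

lemma cumstep_mono: "k \<le> i \<Longrightarrow> cumstep k \<le> cumstep i"
  using cumstep_diff[of k i] sum_nonneg[of "{k<..i}" s] step_nonneg by simp

lemma cumstep_diff_ge:
  assumes "k \<le> i" "\<And>j. j \<in> {k<..i} \<Longrightarrow> c \<le> s j"
  shows "real (i - k) * c \<le> cumstep i - cumstep k"
  using sum_bounded_below[of "{k<..i}" c s] assms cumstep_diff[OF assms(1)] by simp

lemma cumstep_diff_ge_step: "k \<le> i \<Longrightarrow> real (i - k) * s i \<le> cumstep i - cumstep k"
  by (rule cumstep_diff_ge) (auto intro: step_antimono)

definition exp_chord_const :: real where
  "exp_chord_const = \<eta> / (1 - exp (-\<eta>))"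

lemma exp_chord_const_pos: "exp_chord_const > 0"
  using eta_pos unfolding exp_chord_const_def by (simp add: divide_pos_pos)

text \<open>Convexity of \<open>exp\<close>: on \<open>[0, \<eta>]\<close> the chord from \<open>0\<close> to \<open>\<eta>\<close> lies above
  \<open>exp (-x)\<close>.\<close>

lemma le_exp_chord_const: "0 \<le> x \<Longrightarrow> x \<le> \<eta> \<Longrightarrow> x \<le> exp_chord_const * (1 - exp (-x))"
proof -
  assume x: "0 \<le> x" "x \<le> \<eta>"
  define t where "t = x / \<eta>"
  have t: "0 \<le> t" "t \<le> 1" "t * \<eta> = x" using x eta_pos by (auto simp: t_def)
  have "exp ((1 - t) *\<^sub>R 0 + t *\<^sub>R (-\<eta>)) \<le> (1 - t) * exp 0 + t * exp (-\<eta>)"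
    by (rule convex_onD[OF exp_convex t(1,2)]) auto
  then have "t * (1 - exp (-\<eta>)) \<le> 1 - exp (-x)"
    using t(3) by (simp add: algebra_simps)
  moreover have "1 - exp (-\<eta>) > 0" using eta_pos by simp
  ultimately show ?thesis
    unfolding exp_chord_const_def t_def using eta_pos by (simp add: field_simps)
qed

lemma step_le_exp_chord_const: "1 \<le> m \<Longrightarrow> s m \<le> exp_chord_const * (1 - exp (- s m))"
  by (intro le_exp_chord_const step_nonneg step_le_eta)

definition coef :: "nat \<Rightarrow> nat \<Rightarrow> real" where
  "coef i k = (if 1 \<le> k \<and> k \<le> i then s k * (\<Prod>m\<in>{k<..i}. 1 - s m) else 0)"

lemma coef_eq_0: "i < k \<Longrightarrow> coef i k = 0"
  by (simp add: coef_def)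

lemma coef_Suc: "1 \<le> k \<Longrightarrow> k \<le> i \<Longrightarrow> coef (Suc i) k = (1 - s (Suc i)) * coef i k"
proof -
  assume k: "1 \<le> k" "k \<le> i"
  then have "{k<..Suc i} = insert (Suc i) {k<..i}" by auto
  then show ?thesis using k by (simp add: coef_def)
qed

lemma Xseq_eq_sum_coef: "Xseq \<eta> \<alpha> e i \<omega> = (\<Sum>k\<in>{1..i}. coef i k * e k \<omega>)"
proof (induction i)
  case 0 then show ?case by simp
next
  case (Suc i)
  have "(\<Sum>k\<in>{1..Suc i}. coef (Suc i) k * e k \<omega>)
      = (\<Sum>k\<in>{1..i}. coef (Suc i) k * e k \<omega>) + s (Suc i) * e (Suc i) \<omega>"
    by (simp add: coef_def)
  also have "(\<Sum>k\<in>{1..i}. coef (Suc i) k * e k \<omega>) = (1 - s (Suc i)) * (\<Sum>k\<in>{1..i}. coef i k * e k \<omega>)"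
    by (simp add: sum_distrib_left coef_Suc mult.assoc)
  finally show ?case using Suc by simp
qed

lemma Xseq_eq_sum_coef_upto: "i \<le> n \<Longrightarrow> Xseq \<eta> \<alpha> e i \<omega> = (\<Sum>k\<in>{1..n}. coef i k * e k \<omega>)"
  unfolding Xseq_eq_sum_coef by (rule sum.mono_neutral_left) (auto simp: coef_eq_0)

definition coef_majorant :: "nat \<Rightarrow> nat \<Rightarrow> real" where
  "coef_majorant i k = (if 1 \<le> k \<and> k \<le> i then s k * exp (-(cumstep i - cumstep k)) else 0)"

text \<open>For \<open>s m \<le> 1\<close> we have \<open>\<bar>1 - s m\<bar> \<le> exp (- s m)\<close>; only the finitely many indices with
  \<open>m < \<eta> powr (1/\<alpha>)\<close> can violate this, and they contribute a constant factor.\<close>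

definition coef_const :: real where
  "coef_const = (\<Prod>m\<le>nat \<lceil>\<eta> powr (1/\<alpha>)\<rceil>. max 1 (\<bar>1 - s m\<bar> * exp (s m)))"

lemma coef_const_ge_one: "1 \<le> coef_const"
  unfolding coef_const_def by (rule prod_ge_1) auto

lemma prod_abs_one_minus_step_le:
  assumes "finite A"
  shows "(\<Prod>m\<in>A. \<bar>1 - s m\<bar>) \<le> coef_const * exp (- (\<Sum>m\<in>A. s m))"
proof -
  define N where "N = nat \<lceil>\<eta> powr (1/\<alpha>)\<rceil>"
  define g where "g m = (if m \<le> N then max 1 (\<bar>1 - s m\<bar> * exp (s m)) else 1)" for m
  have le_g: "\<bar>1 - s m\<bar> * exp (s m) \<le> g m" for m
  proof (cases "m \<le> N")
    case False
    then have "s m \<le> 1" unfolding N_def by (intro step_le_one) linarith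
    then have "\<bar>1 - s m\<bar> \<le> exp (- s m)"
      using exp_ge_add_one_self[of "- s m"] step_nonneg[of m] by simp
    then show ?thesis using False by (simp add: g_def exp_minus field_simps)
  qed (simp add: g_def)
  have "(\<Prod>m\<in>A. \<bar>1 - s m\<bar> * exp (s m)) = (\<Prod>m\<in>A. \<bar>1 - s m\<bar>) * exp (\<Sum>m\<in>A. s m)"
    using assms by (simp add: prod.distrib exp_sum)
  then have "(\<Prod>m\<in>A. \<bar>1 - s m\<bar>) = (\<Prod>m\<in>A. \<bar>1 - s m\<bar> * exp (s m)) * exp (- (\<Sum>m\<in>A. s m))"
    by (simp add: mult.assoc exp_minus_inverse)
  also have "(\<Prod>m\<in>A. \<bar>1 - s m\<bar> * exp (s m)) \<le> (\<Prod>m\<in>A. g m)"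
    by (intro prod_mono) (simp add: le_g)
  also have "(\<Prod>m\<in>A. g m) = (\<Prod>m\<in>A \<inter> {..N}. g m)"
    by (rule prod.mono_neutral_right) (use assms in \<open>auto simp: g_def\<close>)
  also have "\<dots> \<le> (\<Prod>m\<in>{..N}. g m)"
    by (rule prod_mono2) (auto simp: g_def)
  also have "\<dots> = coef_const" unfolding coef_const_def g_def N_def by simp
  finally show ?thesis by (simp add: mult_right_mono)
qed

lemma abs_coef_le: "\<bar>coef i k\<bar> \<le> coef_const * coef_majorant i k"
proof (cases "1 \<le> k \<and> k \<le> i")
  case True
  have "\<bar>coef i k\<bar> = s k * (\<Prod>m\<in>{k<..i}. \<bar>1 - s m\<bar>)"
    using True step_nonneg[of k] by (simp add: coef_def abs_mult abs_prod)
  also have "\<dots> \<le> s k * (coef_const * exp (- (cumstep i - cumstep k)))"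
    using True by (intro mult_left_mono step_nonneg)
      (simp_all add: cumstep_diff prod_abs_one_minus_step_le)
  finally show ?thesis using True by (simp add: coef_majorant_def mult_ac)
qed (auto simp: coef_def coef_majorant_def)

lemma coef_majorant_nonneg: "0 \<le> coef_majorant i k"
  unfolding coef_majorant_def using step_nonneg by simp

lemma coef_majorant_le_eta: "coef_majorant i k \<le> \<eta>"
proof (cases "1 \<le> k \<and> k \<le> i")
  case True
  then have "exp (-(cumstep i - cumstep k)) \<le> 1" using cumstep_mono[of k i] by simp
  then have "coef_majorant i k \<le> s k"
    using True step_nonneg[of k] by (simp add: coef_majorant_def mult_left_le)
  then show ?thesis using True step_le_eta[of k] by simp
qed (use eta_pos in \<open>auto simp: coef_majorant_def\<close>)

lemma coef_majorant_mult:
  "j \<le> i \<Longrightarrow> coef_majorant i k * coef_majorant j k = exp (-(cumstep i - cumstep j)) * (coef_majorant j k)\<^sup>2"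
  by (auto simp: coef_majorant_def power2_eq_square mult_ac exp_add[symmetric])

lemma sum_step_exp_cumstep_le: "(\<Sum>k\<in>{1..i}. s k * exp (cumstep k)) \<le> exp_chord_const * (exp (cumstep i) - 1)"
proof (induction i)
  case 0 then show ?case by (simp add: cumstep_def)
next
  case (Suc i)
  have "s (Suc i) * exp (cumstep (Suc i))
      \<le> exp_chord_const * (1 - exp (- s (Suc i))) * exp (cumstep (Suc i))"
    by (intro mult_right_mono step_le_exp_chord_const) simp_all
  also have "\<dots> = exp_chord_const * (exp (cumstep (Suc i)) - exp (cumstep i))"
    by (simp add: cumstep_Suc algebra_simps exp_add[symmetric] exp_diff)
  finally show ?case using Suc by (simp add: algebra_simps)
qed

lemma row_sum_coef_majorant_le:
  assumes "finite A"
  shows "(\<Sum>k\<in>A. coef_majorant i k) \<le> exp_chord_const"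
proof -
  have "(\<Sum>k\<in>A. coef_majorant i k) \<le> (\<Sum>k\<in>{1..i}. coef_majorant i k)"
    using assms by (intro sum_le_sum_of_vanishing_outside)
      (auto simp: coef_majorant_def intro!: mult_nonneg_nonneg step_nonneg)
  also have "\<dots> = exp (- cumstep i) * (\<Sum>k\<in>{1..i}. s k * exp (cumstep k))"
    by (simp add: sum_distrib_left coef_majorant_def exp_diff exp_minus field_simps)
  also have "\<dots> \<le> exp (- cumstep i) * (exp_chord_const * (exp (cumstep i) - 1))"
    by (rule mult_left_mono[OF sum_step_exp_cumstep_le]) simp
  also have "\<dots> \<le> exp_chord_const"
    using exp_chord_const_pos by (simp add: algebra_simps exp_minus_inverse)
  finally show ?thesis .
qed

definition tail_exp :: "nat \<Rightarrow> real" where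
  "tail_exp i = exp (- ((\<eta> / 2) * real i powr (1 - \<alpha>)))"

lemma tail_exp_nonneg: "0 \<le> tail_exp i"
  unfolding tail_exp_def by simp

lemma summable_tail_exp: "summable tail_exp"
proof -
  have "tail_exp \<in> O(\<lambda>n. 1 / real n ^ 2)"
    unfolding tail_exp_def using eta_pos alpha_lt_one by real_asymp
  moreover have "summable (\<lambda>n. norm (1 / real n ^ 2 :: real))"
    using inverse_power_summable[of 2, where ?'a = real] by (simp add: divide_inverse)
  ultimately show ?thesis by (rule summable_comparison_test_bigo[rotated])
qed

definition col_const :: real where
  "col_const = 2 * exp_chord_const + \<eta> * suminf tail_exp"

lemma col_const_nonneg: "0 \<le> col_const"
  unfolding col_const_def
  using exp_chord_const_pos eta_pos suminf_nonneg[OF summable_tail_exp tail_exp_nonneg] by simp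

text \<open>Up to time \<open>2 k\<close> the steps are at least \<open>s k / 2\<close>, so column \<open>k\<close> decays geometrically;
  beyond that, \<open>i - k \<ge> i / 2\<close> steps of size \<open>s i\<close> give a summable tail in \<open>i\<close>.\<close>

lemma coef_majorant_le_geometric:
  assumes k: "1 \<le> k"
  shows "coef_majorant i k \<le> s k * (if k \<le> i then exp (- (s k / 2)) ^ (i - k) else 0) + \<eta> * tail_exp i"
proof -
  have tail_nonneg: "0 \<le> \<eta> * tail_exp i" using eta_pos tail_exp_nonneg[of i] by simp
  consider "i < k" | "k \<le> i" "i \<le> 2 * k" | "2 * k < i" by linarith
  then show ?thesis
  proof cases
    case 1 then show ?thesis using tail_nonneg by (simp add: coef_majorant_def)
  next
    case 2
    have "real (i - k) * (s k / 2) \<le> cumstep i - cumstep k"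
    proof (rule cumstep_diff_ge[OF 2(1)])
      fix j assume "j \<in> {k<..i}"
      then have "s (2 * k) \<le> s j" using 2 by (intro step_antimono) auto
      then show "s k / 2 \<le> s j" using half_step_le_step_double[OF k] by linarith
    qed
    then have "exp (-(cumstep i - cumstep k)) \<le> exp (- (s k / 2)) ^ (i - k)"
      by (simp add: exp_of_nat_mult[symmetric])
    then have "s k * exp (-(cumstep i - cumstep k)) \<le> s k * exp (- (s k / 2)) ^ (i - k)"
      by (rule mult_left_mono) (rule step_nonneg)
    then show ?thesis using 2 k tail_nonneg by (simp add: coef_majorant_def)
  next
    case 3
    have "real i powr (1 + - \<alpha>) = real i powr 1 * real i powr (- \<alpha>)"
      by (rule powr_add)
    then have "(\<eta> / 2) * real i powr (1 - \<alpha>) = (real i / 2) * s i"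
      using 3 by (simp add: step_eq)
    also have "\<dots> \<le> real (i - k) * s i"
      using 3 step_nonneg[of i] by (intro mult_right_mono) auto
    also have "\<dots> \<le> cumstep i - cumstep k"
      using 3 by (intro cumstep_diff_ge_step) auto
    finally have "exp (-(cumstep i - cumstep k)) \<le> tail_exp i"
      unfolding tail_exp_def by simp
    then have "s k * exp (-(cumstep i - cumstep k)) \<le> \<eta> * tail_exp i"
      using step_le_eta[OF k] step_nonneg[of k] by (intro mult_mono) auto
    moreover have "0 \<le> s k * exp (- (s k / 2)) ^ (i - k)" using step_nonneg[of k] by simp
    ultimately show ?thesis using 3 k by (simp add: coef_majorant_def)
  qed
qed

lemma col_sum_coef_majorant_le:
  assumes k: "1 \<le> k"
  shows "(\<Sum>i\<in>{1..n}. coef_majorant i k) \<le> col_const"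
proof -
  define r where "r = exp (- (s k / 2))"
  have r: "0 \<le> r" "r < 1" using step_pos[OF k] by (auto simp: r_def)
  have "(\<Sum>i\<in>{1..n}. coef_majorant i k)
      \<le> (\<Sum>i\<in>{1..n}. s k * (if k \<le> i then r ^ (i - k) else 0) + \<eta> * tail_exp i)"
    unfolding r_def by (intro sum_mono coef_majorant_le_geometric[OF k])
  also have "\<dots> = s k * (\<Sum>i\<in>{1..n}. if k \<le> i then r ^ (i - k) else 0) + \<eta> * (\<Sum>i\<in>{1..n}. tail_exp i)"
    by (simp add: sum.distrib sum_distrib_left)
  also have "\<dots> \<le> s k * (1 / (1 - r)) + \<eta> * suminf tail_exp"
    using r step_nonneg[of k] eta_pos
    by (intro add_mono mult_left_mono sum_shifted_power_le sum_le_suminf summable_tail_exp)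
       (auto simp: tail_exp_nonneg)
  also have "s k * (1 / (1 - r)) \<le> 2 * exp_chord_const"
  proof -
    have "s k / 2 \<le> exp_chord_const * (1 - r)" unfolding r_def
      by (rule le_exp_chord_const) (use step_nonneg[of k] step_le_eta[OF k] eta_pos in auto)
    then show ?thesis using r by (simp add: field_simps)
  qed
  finally show ?thesis unfolding col_const_def by linarith
qed

definition window :: "nat \<Rightarrow> nat set" where
  "window i = {i + 1 - blen C \<alpha> i ..< i}"

definition est_weight :: "nat \<Rightarrow> nat \<Rightarrow> real" where
  "est_weight i j = (if j = i then 1 else if j \<in> window i then 2 else 0)"

definition est_support :: "nat \<Rightarrow> nat \<Rightarrow> real" where
  "est_support i j = of_bool (j = i \<or> j \<in> window i)"

definition est_matrix :: "nat \<Rightarrow> nat \<Rightarrow> nat \<Rightarrow> real" where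
  "est_matrix n k l = (1 / real n) * (\<Sum>i\<in>{1..n}. \<Sum>j\<in>{1..n}. est_weight i j * coef i k * coef j l)"

definition est_matrix_majorant :: "nat \<Rightarrow> nat \<Rightarrow> nat \<Rightarrow> real" where
  "est_matrix_majorant n k l =
     (\<Sum>i\<in>{1..n}. \<Sum>j\<in>{1..n}. coef_majorant i k * est_support i j * coef_majorant j l)"

lemma window_subset: "window i \<subseteq> {..<i}"
  by (auto simp: window_def)

lemma card_window_le: "card (window i) \<le> blen C \<alpha> i"
  unfolding window_def by simp

lemma abs_est_matrix_le:
  assumes "1 \<le> n"
  shows "\<bar>est_matrix n k l\<bar> \<le> 2 * coef_const\<^sup>2 / real n * est_matrix_majorant n k l"
proof -
  have "\<bar>est_weight i j * coef i k * coef j l\<bar>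
      \<le> 2 * coef_const\<^sup>2 * (coef_majorant i k * est_support i j * coef_majorant j l)" for i j
  proof -
    have "\<bar>est_weight i j * coef i k * coef j l\<bar> = \<bar>est_weight i j\<bar> * \<bar>coef i k\<bar> * \<bar>coef j l\<bar>"
      by (simp add: abs_mult)
    also have "\<dots> \<le> (2 * est_support i j) * (coef_const * coef_majorant i k) * (coef_const * coef_majorant j l)"
      using coef_const_ge_one
      by (intro mult_mono abs_coef_le)
         (auto simp: est_weight_def est_support_def intro!: mult_nonneg_nonneg coef_majorant_nonneg)
    finally show ?thesis by (simp add: power2_eq_square mult_ac)
  qed
  then have "\<bar>\<Sum>i\<in>{1..n}. \<Sum>j\<in>{1..n}. est_weight i j * coef i k * coef j l\<bar>
      \<le> (\<Sum>i\<in>{1..n}. \<Sum>j\<in>{1..n}. 2 * coef_const\<^sup>2 * (coef_majorant i k * est_support i j * coef_majorant j l))"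
    by (intro order_trans[OF sum_abs sum_mono] order_trans[OF sum_abs sum_mono])
  then have "\<bar>\<Sum>i\<in>{1..n}. \<Sum>j\<in>{1..n}. est_weight i j * coef i k * coef j l\<bar>
      \<le> 2 * coef_const\<^sup>2 * est_matrix_majorant n k l"
    by (simp add: est_matrix_majorant_def sum_distrib_left)
  then show ?thesis
    using assms unfolding est_matrix_def by (simp add: abs_mult divide_right_mono)
qed

lemma sq_est_matrix_le:
  assumes "1 \<le> n"
  shows "(est_matrix n k l)\<^sup>2 \<le> (2 * coef_const\<^sup>2 / real n)\<^sup>2 * (est_matrix_majorant n k l)\<^sup>2"
proof -
  have "\<bar>est_matrix n k l\<bar>\<^sup>2 \<le> (2 * coef_const\<^sup>2 / real n * est_matrix_majorant n k l)\<^sup>2"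
    by (rule power_mono[OF abs_est_matrix_le[OF assms]]) simp
  then show ?thesis by (simp only: power2_abs power_mult_distrib)
qed

lemma sum_sq_est_matrix_majorant_le:
  "(\<Sum>k\<in>{1..n}. \<Sum>l\<in>{1..n}. (est_matrix_majorant n k l)\<^sup>2)
     \<le> (exp_chord_const * col_const)\<^sup>2 * (\<Sum>i\<in>{1..n}. \<Sum>j\<in>{1..n}. (est_support i j)\<^sup>2)"
proof -
  define T where "T i l = (\<Sum>j\<in>{1..n}. coef_majorant j l * est_support i j)" for i l
  have Q: "est_matrix_majorant n k l = (\<Sum>i\<in>{1..n}. coef_majorant i k * T i l)" for k l
    unfolding est_matrix_majorant_def T_def by (simp add: sum_distrib_left mult_ac)
  have rows: "\<And>i. i \<in> {1..n} \<Longrightarrow> (\<Sum>k\<in>{1..n}. coef_majorant i k) \<le> exp_chord_const"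
    by (rule row_sum_coef_majorant_le) simp
  have cols: "\<And>k. k \<in> {1..n} \<Longrightarrow> (\<Sum>i\<in>{1..n}. coef_majorant i k) \<le> col_const"
    by (rule col_sum_coef_majorant_le) simp
  note Schur = Schur_test_sum[OF coef_majorant_nonneg rows cols col_const_nonneg]
  have "(\<Sum>k\<in>{1..n}. \<Sum>l\<in>{1..n}. (est_matrix_majorant n k l)\<^sup>2)
      = (\<Sum>l\<in>{1..n}. \<Sum>k\<in>{1..n}. (\<Sum>i\<in>{1..n}. coef_majorant i k * T i l)\<^sup>2)"
    unfolding Q by (rule sum.swap)
  also have "\<dots> \<le> (\<Sum>l\<in>{1..n}. exp_chord_const * col_const * (\<Sum>i\<in>{1..n}. (T i l)\<^sup>2))"
    by (intro sum_mono Schur)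
  also have "\<dots> = exp_chord_const * col_const * (\<Sum>l\<in>{1..n}. \<Sum>i\<in>{1..n}. (T i l)\<^sup>2)"
    by (simp add: sum_distrib_left)
  also have "(\<Sum>l\<in>{1..n}. \<Sum>i\<in>{1..n}. (T i l)\<^sup>2) = (\<Sum>i\<in>{1..n}. \<Sum>l\<in>{1..n}. (T i l)\<^sup>2)"
    by (rule sum.swap)
  also have "exp_chord_const * col_const * \<dots> \<le> exp_chord_const * col_const *
      (\<Sum>i\<in>{1..n}. exp_chord_const * col_const * (\<Sum>j\<in>{1..n}. (est_support i j)\<^sup>2))"
    unfolding T_def using exp_chord_const_pos col_const_nonneg
    by (intro mult_left_mono sum_mono Schur) auto
  also have "\<dots> = (exp_chord_const * col_const)\<^sup>2 * (\<Sum>i\<in>{1..n}. \<Sum>j\<in>{1..n}. (est_support i j)\<^sup>2)"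
    by (simp add: sum_distrib_left power2_eq_square mult_ac)
  finally show ?thesis .
qed

lemma sum_sq_est_support_le: "(\<Sum>j\<in>{1..n}. (est_support i j)\<^sup>2) \<le> 1 + real (blen C \<alpha> i)"
proof -
  have "(\<Sum>j\<in>{1..n}. (est_support i j)\<^sup>2) \<le> (\<Sum>j\<in>insert i (window i). (est_support i j)\<^sup>2)"
    by (rule sum_le_sum_of_vanishing_outside) (auto simp: est_support_def window_def)
  also have "\<dots> \<le> real (card (insert i (window i)))"
    using sum_bounded_above[of "insert i (window i)" "\<lambda>j. (est_support i j)\<^sup>2" 1]
    by (simp add: est_support_def)
  also have "\<dots> \<le> 1 + real (blen C \<alpha> i)"
    using card_insert_le_m1 card_window_le[of i] by (simp add: card_insert_if window_def)
  finally show ?thesis .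
qed

lemma blen_le: "1 \<le> i \<Longrightarrow> i \<le> n \<Longrightarrow> real (blen C \<alpha> i) \<le> C * real n powr \<alpha> * ln (real n)"
proof -
  assume i: "1 \<le> i" "i \<le> n"
  have "real (blen C \<alpha> i) \<le> C * real i powr \<alpha> * ln (real i)"
    unfolding blen_def using C_pos i by simp
  also have "\<dots> \<le> C * real n powr \<alpha> * ln (real n)"
    using C_pos i alpha_gt_half by (intro mult_mono mult_left_mono powr_mono2) auto
  finally show ?thesis .
qed

definition frob_const :: real where
  "frob_const = 4 * coef_const ^ 4 * (exp_chord_const * col_const)\<^sup>2"

lemma sum_sq_est_matrix_le:
  assumes n: "1 \<le> n"
  shows "(\<Sum>k\<in>{1..n}. \<Sum>l\<in>{1..n}. (est_matrix n k l)\<^sup>2)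
    \<le> frob_const * (1 / real n + C * real n powr (\<alpha> - 1) * ln (real n))"
proof -
  have n_pos: "real n > 0" using n by simp
  have "(\<Sum>k\<in>{1..n}. \<Sum>l\<in>{1..n}. (est_matrix n k l)\<^sup>2)
      \<le> (\<Sum>k\<in>{1..n}. \<Sum>l\<in>{1..n}. (2 * coef_const\<^sup>2 / real n)\<^sup>2 * (est_matrix_majorant n k l)\<^sup>2)"
    by (intro sum_mono sq_est_matrix_le n)
  also have "\<dots> = (2 * coef_const\<^sup>2 / real n)\<^sup>2 * (\<Sum>k\<in>{1..n}. \<Sum>l\<in>{1..n}. (est_matrix_majorant n k l)\<^sup>2)"
    by (simp add: sum_distrib_left)
  also have "\<dots> \<le> (2 * coef_const\<^sup>2 / real n)\<^sup>2 * ((exp_chord_const * col_const)\<^sup>2 *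
      (\<Sum>i\<in>{1..n}. \<Sum>j\<in>{1..n}. (est_support i j)\<^sup>2))"
    by (intro mult_left_mono sum_sq_est_matrix_majorant_le) simp
  also have "\<dots> \<le> (2 * coef_const\<^sup>2 / real n)\<^sup>2 * ((exp_chord_const * col_const)\<^sup>2 *
      (real n * (1 + C * real n powr \<alpha> * ln (real n))))"
  proof -
    have "(\<Sum>i\<in>{1..n}. \<Sum>j\<in>{1..n}. (est_support i j)\<^sup>2)
        \<le> (\<Sum>i\<in>{1..n}. 1 + C * real n powr \<alpha> * ln (real n))"
      by (intro sum_mono order_trans[OF sum_sq_est_support_le]) (use blen_le in auto)
    then show ?thesis by (intro mult_left_mono) simp_all
  qed
  also have "(2 * coef_const\<^sup>2 / real n)\<^sup>2 * ((exp_chord_const * col_const)\<^sup>2 *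
      (real n * (1 + C * real n powr \<alpha> * ln (real n))))
      = frob_const * (1 / real n + C * (real n powr \<alpha> / real n) * ln (real n))"
    using n_pos unfolding frob_const_def by (simp add: field_simps power2_eq_square eval_nat_numeral)
  also have "real n powr \<alpha> / real n = real n powr (\<alpha> - 1)"
    using n_pos by (simp add: powr_diff)
  finally show ?thesis .
qed

definition gram :: "nat \<Rightarrow> nat \<Rightarrow> nat \<Rightarrow> real" where
  "gram n i j = (\<Sum>k\<in>{1..n}. coef i k * coef j k)"

lemma gram_sym: "gram n i j = gram n j i"
  unfolding gram_def by (simp add: mult.commute)

lemma abs_gram_le:
  assumes "j \<le> i"
  shows "\<bar>gram n i j\<bar> \<le> coef_const\<^sup>2 * \<eta> * exp_chord_const * exp (- s i) ^ (i - j)"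
proof -
  have "\<bar>gram n i j\<bar> \<le> (\<Sum>k\<in>{1..n}. (coef_const * coef_majorant i k) * (coef_const * coef_majorant j k))"
    unfolding gram_def using coef_const_ge_one
    by (intro order_trans[OF sum_abs sum_mono])
       (auto simp: abs_mult intro!: mult_mono abs_coef_le mult_nonneg_nonneg coef_majorant_nonneg)
  also have "\<dots> = coef_const\<^sup>2 * exp (- (cumstep i - cumstep j)) * (\<Sum>k\<in>{1..n}. (coef_majorant j k)\<^sup>2)"
    by (simp add: sum_distrib_left power2_eq_square mult_ac
        coef_majorant_mult[OF assms, simplified power2_eq_square])
  finally have gram_le: "\<bar>gram n i j\<bar>
      \<le> coef_const\<^sup>2 * exp (- (cumstep i - cumstep j)) * (\<Sum>k\<in>{1..n}. (coef_majorant j k)\<^sup>2)" .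
  have "(\<Sum>k\<in>{1..n}. (coef_majorant j k)\<^sup>2) \<le> (\<Sum>k\<in>{1..n}. \<eta> * coef_majorant j k)"
    by (intro sum_mono) (simp add: power2_eq_square mult_right_mono coef_majorant_le_eta coef_majorant_nonneg)
  also have "\<dots> \<le> \<eta> * exp_chord_const"
    unfolding sum_distrib_left[symmetric] using eta_pos
    by (intro mult_left_mono row_sum_coef_majorant_le) auto
  finally have row_le: "(\<Sum>k\<in>{1..n}. (coef_majorant j k)\<^sup>2) \<le> \<eta> * exp_chord_const" .
  have decay: "exp (- (cumstep i - cumstep j)) \<le> exp (- s i) ^ (i - j)"
    using cumstep_diff_ge_step[OF assms] by (simp add: exp_of_nat_mult[symmetric])
  have "coef_const\<^sup>2 * exp (- (cumstep i - cumstep j)) * (\<Sum>k\<in>{1..n}. (coef_majorant j k)\<^sup>2)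
      \<le> coef_const\<^sup>2 * exp (- s i) ^ (i - j) * (\<eta> * exp_chord_const)"
    by (intro mult_mono mult_left_mono row_le decay) (auto intro: sum_nonneg)
  then show ?thesis using gram_le by (simp add: mult_ac)
qed

text \<open>This is where the batch length \<open>\<lfloor>C i\<^sup>\<alpha> log i\<rfloor>\<close> enters: over a window of that length the
  correlations decay by the factor \<open>i\<^sup>-\<^sup>\<eta>\<^sup>C\<close>.\<close>

lemma exp_step_power_blen_le:
  assumes i: "1 \<le> i"
  shows "exp (- s i) ^ blen C \<alpha> i \<le> exp \<eta> * real i powr (- (\<eta> * C))"
proof -
  have "real i powr \<alpha> * real i powr (- \<alpha>) = 1"
    using i by (simp add: powr_add[symmetric])
  then have "(C * real i powr \<alpha> * ln (real i) - 1) * s i = \<eta> * C * ln (real i) - s i"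
    by (simp add: step_eq algebra_simps)
  moreover have "(C * real i powr \<alpha> * ln (real i) - 1) * s i \<le> real (blen C \<alpha> i) * s i"
    unfolding blen_def using C_pos i step_nonneg[of i] by (intro mult_right_mono) auto
  ultimately have "\<eta> * C * ln (real i) - \<eta> \<le> real (blen C \<alpha> i) * s i"
    using step_le_eta[OF i] by linarith
  then have "exp (- (real (blen C \<alpha> i) * s i)) \<le> exp (\<eta> - \<eta> * C * ln (real i))"
    by simp
  also have "\<dots> = exp \<eta> * real i powr (- (\<eta> * C))"
    using i by (simp add: powr_def exp_diff exp_minus divide_inverse)
  finally show ?thesis by (simp add: exp_of_nat_mult[symmetric])
qed

lemma window_tail_le:
  assumes i: "1 \<le> i"
  shows "exp (- s i) ^ max 1 (blen C \<alpha> i) / (1 - exp (- s i))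
    \<le> exp \<eta> * real i powr (- (\<eta> * C)) * (exp_chord_const / s i)"
proof -
  have r: "0 \<le> exp (- s i)" "exp (- s i) < 1" using step_pos[OF i] by auto
  have "exp (- s i) ^ max 1 (blen C \<alpha> i) \<le> exp (- s i) ^ blen C \<alpha> i"
    by (rule power_decreasing) (use r in auto)
  also have "\<dots> \<le> exp \<eta> * real i powr (- (\<eta> * C))"
    by (rule exp_step_power_blen_le[OF i])
  finally have num: "exp (- s i) ^ max 1 (blen C \<alpha> i) \<le> exp \<eta> * real i powr (- (\<eta> * C))" .
  have den: "1 / (1 - exp (- s i)) \<le> exp_chord_const / s i"
    using step_le_exp_chord_const[OF i] step_pos[OF i] r by (simp add: field_simps)
  have "exp (- s i) ^ max 1 (blen C \<alpha> i) * (1 / (1 - exp (- s i)))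
      \<le> exp \<eta> * real i powr (- (\<eta> * C)) * (exp_chord_const / s i)"
    by (intro mult_mono num den) (use r in auto)
  then show ?thesis by simp
qed

definition bias_row_const :: real where
  "bias_row_const = coef_const\<^sup>2 * exp_chord_const\<^sup>2 * exp \<eta>"

lemma sum_gram_outside_window_le:
  assumes i: "1 \<le> i"
  shows "\<bar>\<Sum>j\<in>{1..n}. if j < i \<and> j \<notin> window i then gram n i j else 0\<bar>
    \<le> bias_row_const * real i powr (\<alpha> - 1)"
proof -
  define c where "c = coef_const\<^sup>2 * \<eta> * exp_chord_const"
  define r where "r = exp (- s i)"
  define J where "J = {j \<in> {1..n}. j < i \<and> j \<notin> window i}"
  have r: "0 \<le> r" "r < 1" using step_pos[OF i] by (auto simp: r_def)
  have c: "0 \<le> c" using exp_chord_const_pos eta_pos by (simp add: c_def)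
  have far: "max 1 (blen C \<alpha> i) \<le> i - j" if "j \<in> J" for j
  proof -
    from that have "j < i" "\<not> i + 1 - blen C \<alpha> i \<le> j" by (auto simp: J_def window_def)
    then show ?thesis by linarith
  qed
  have "\<bar>\<Sum>j\<in>{1..n}. if j < i \<and> j \<notin> window i then gram n i j else 0\<bar> = \<bar>\<Sum>j\<in>J. gram n i j\<bar>"
    by (simp only: J_def sum.inter_filter[OF finite_atLeastAtMost])
  also have "\<dots> \<le> (\<Sum>j\<in>J. c * r ^ (i - j))"
    unfolding c_def r_def by (intro order_trans[OF sum_abs sum_mono] abs_gram_le) (simp add: J_def)
  also have "\<dots> = c * (\<Sum>d\<in>(\<lambda>j. i - j) ` J. r ^ d)"
    by (subst sum.reindex) (auto simp: J_def inj_on_def sum_distrib_left)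
  also have "\<dots> \<le> c * (r ^ max 1 (blen C \<alpha> i) / (1 - r))"
    using r far by (intro mult_left_mono c sum_power_le_geometric_tail) (auto simp: J_def)
  also have "\<dots> \<le> c * (exp \<eta> * real i powr (- (\<eta> * C)) * (exp_chord_const / s i))"
    unfolding r_def by (intro mult_left_mono window_tail_le i c)
  also have "\<dots> = bias_row_const * (real i powr \<alpha> * real i powr (- (\<eta> * C)))"
    using step_pos[OF i] eta_pos i unfolding c_def bias_row_const_def step_eq
    by (simp add: powr_minus field_simps power2_eq_square)
  also have "\<dots> \<le> bias_row_const * real i powr (\<alpha> - 1)"
    unfolding powr_add[symmetric] bias_row_const_def
    using i eta_C_gt_one by (intro mult_left_mono powr_mono) auto
  finally show ?thesis .
qed

text \<open>By symmetry of the Gram matrix, the pairs below the diagonal inside the window (weight 2)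
  cancel against their mirror images above it (weight 0), leaving only the pairs outside the window.\<close>

lemma sum_est_weight_gram_eq:
  "(\<Sum>i\<in>{1..n}. \<Sum>j\<in>{1..n}. (est_weight i j - 1) * gram n i j)
     = -2 * (\<Sum>i\<in>{1..n}. \<Sum>j\<in>{1..n}. if j < i \<and> j \<notin> window i then gram n i j else 0)"
proof -
  have "(\<Sum>i\<in>{1..n}. \<Sum>j\<in>{1..n}. (est_weight i j - 1) * gram n i j)
     = (\<Sum>i\<in>{1..n}. \<Sum>j\<in>{1..n}. -2 * (if j < i \<and> j \<notin> window i then gram n i j else 0))"
  proof (rule sum_sum_eq_if_symmetrizations_eq)
    fix i j
    have "i \<notin> window j" if "j < i" using window_subset[of j] that by auto
    moreover have "j \<notin> window i" if "i < j" using window_subset[of i] that by auto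
    ultimately show "(est_weight i j - 1) * gram n i j + (est_weight j i - 1) * gram n j i
      = -2 * (if j < i \<and> j \<notin> window i then gram n i j else 0)
        + -2 * (if i < j \<and> i \<notin> window j then gram n j i else 0)"
      by (cases i j rule: linorder_cases) (auto simp: est_weight_def gram_sym[of n j i])
  qed
  then show ?thesis by (simp add: sum_distrib_left)
qed

definition bias_const :: real where
  "bias_const = 2 * bias_row_const / \<alpha>"

lemma abs_sum_est_weight_gram_le:
  "\<bar>\<Sum>i\<in>{1..n}. \<Sum>j\<in>{1..n}. (est_weight i j - 1) * gram n i j\<bar> \<le> bias_const * real n powr \<alpha>"
proof -
  have "\<bar>\<Sum>i\<in>{1..n}. \<Sum>j\<in>{1..n}. (est_weight i j - 1) * gram n i j\<bar>
      = 2 * \<bar>\<Sum>i\<in>{1..n}. \<Sum>j\<in>{1..n}. if j < i \<and> j \<notin> window i then gram n i j else 0\<bar>"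
    unfolding sum_est_weight_gram_eq by (simp add: abs_mult)
  also have "\<dots> \<le> 2 * (\<Sum>i\<in>{1..n}. bias_row_const * real i powr (\<alpha> - 1))"
    by (intro mult_left_mono order_trans[OF sum_abs sum_mono] sum_gram_outside_window_le) auto
  also have "\<dots> \<le> 2 * (bias_row_const * (real n powr \<alpha> / \<alpha>))"
    unfolding sum_distrib_left[symmetric] bias_row_const_def using alpha_gt_half alpha_lt_one
    by (intro mult_left_mono sum_powr_le_integral) auto
  finally show ?thesis by (simp add: bias_const_def)
qed

lemma Wsum_eq_sum_window:
  assumes "i \<le> n"
  shows "Wsum \<eta> \<alpha> C e i \<omega> = (\<Sum>j\<in>{1..n}. if j \<in> window i then Xseq \<eta> \<alpha> e j \<omega> else 0)"
proof -
  have "Wsum \<eta> \<alpha> C e i \<omega> = (\<Sum>j\<in>window i. Xseq \<eta> \<alpha> e j \<omega>)"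
    by (simp add: Wsum_def window_def)
  also have "\<dots> = (\<Sum>j\<in>{1..n} \<inter> window i. Xseq \<eta> \<alpha> e j \<omega>)"
  proof (rule sum.mono_neutral_right)
    show "\<forall>j\<in>window i - {1..n} \<inter> window i. Xseq \<eta> \<alpha> e j \<omega> = 0"
    proof
      fix j assume "j \<in> window i - {1..n} \<inter> window i"
      then have "j = 0" using window_subset[of i] assms by auto
      then show "Xseq \<eta> \<alpha> e j \<omega> = 0" by simp
    qed
  qed (auto simp: window_def)
  finally show ?thesis by (simp add: sum.inter_restrict)
qed

lemma sigma_hat_summand_eq:
  assumes "1 \<le> i" "i \<le> n"
  shows "(Xseq \<eta> \<alpha> e i \<omega>)\<^sup>2 + 2 * Xseq \<eta> \<alpha> e i \<omega> * Wsum \<eta> \<alpha> C e i \<omega>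
       = (\<Sum>j\<in>{1..n}. est_weight i j * (Xseq \<eta> \<alpha> e i \<omega> * Xseq \<eta> \<alpha> e j \<omega>))"
proof -
  let ?X = "\<lambda>j. Xseq \<eta> \<alpha> e j \<omega>"
  have "est_weight i j * P = (if j = i then P else 0) + (if j \<in> window i then 2 * P else 0)" for j P
    using window_subset[of i] by (auto simp: est_weight_def)
  then have "(\<Sum>j\<in>{1..n}. est_weight i j * (?X i * ?X j))
      = (\<Sum>j\<in>{1..n}. if j = i then ?X i * ?X j else 0)
        + (\<Sum>j\<in>{1..n}. if j \<in> window i then 2 * (?X i * ?X j) else 0)"
    by (simp add: sum.distrib)
  also have "(\<Sum>j\<in>{1..n}. if j = i then ?X i * ?X j else 0) = (?X i)\<^sup>2"
    using assms by (simp add: power2_eq_square)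
  also have "(\<Sum>j\<in>{1..n}. if j \<in> window i then 2 * (?X i * ?X j) else 0) = 2 * ?X i * Wsum \<eta> \<alpha> C e i \<omega>"
    unfolding Wsum_eq_sum_window[OF assms(2)]
    by (simp add: sum_distrib_left if_distrib mult.assoc cong: if_cong)
  finally show ?thesis by simp
qed

lemma sigma_hat_eq_sum_est_matrix:
  "sigma_hat \<eta> \<alpha> C e n \<omega> = (\<Sum>k\<in>{1..n}. \<Sum>l\<in>{1..n}. est_matrix n k l * (e k \<omega> * e l \<omega>))"
proof -
  have "(\<Sum>i\<in>{1..n}. (Xseq \<eta> \<alpha> e i \<omega>)\<^sup>2 + 2 * Xseq \<eta> \<alpha> e i \<omega> * Wsum \<eta> \<alpha> C e i \<omega>)
      = (\<Sum>i\<in>{1..n}. \<Sum>j\<in>{1..n}. est_weight i j * (Xseq \<eta> \<alpha> e i \<omega> * Xseq \<eta> \<alpha> e j \<omega>))"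
    by (intro sum.cong refl sigma_hat_summand_eq) auto
  then have "sigma_hat \<eta> \<alpha> C e n \<omega>
      = (1 / real n) * (\<Sum>i\<in>{1..n}. \<Sum>j\<in>{1..n}. est_weight i j * (Xseq \<eta> \<alpha> e i \<omega> * Xseq \<eta> \<alpha> e j \<omega>))"
    by (simp add: sigma_hat_def)
  also have "(\<Sum>i\<in>{1..n}. \<Sum>j\<in>{1..n}. est_weight i j * (Xseq \<eta> \<alpha> e i \<omega> * Xseq \<eta> \<alpha> e j \<omega>))
     = (\<Sum>i\<in>{1..n}. \<Sum>j\<in>{1..n}. \<Sum>k\<in>{1..n}. \<Sum>l\<in>{1..n}.
          est_weight i j * coef i k * coef j l * (e k \<omega> * e l \<omega>))"
  proof (intro sum.cong refl)
    fix i j assume i: "i \<in> {1..n}" and j: "j \<in> {1..n}"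
    have "Xseq \<eta> \<alpha> e i \<omega> = (\<Sum>k\<in>{1..n}. coef i k * e k \<omega>)"
      by (rule Xseq_eq_sum_coef_upto) (use i in simp)
    moreover have "Xseq \<eta> \<alpha> e j \<omega> = (\<Sum>l\<in>{1..n}. coef j l * e l \<omega>)"
      by (rule Xseq_eq_sum_coef_upto) (use j in simp)
    ultimately have "Xseq \<eta> \<alpha> e i \<omega> * Xseq \<eta> \<alpha> e j \<omega>
        = (\<Sum>k\<in>{1..n}. \<Sum>l\<in>{1..n}. coef i k * coef j l * (e k \<omega> * e l \<omega>))"
      by (simp add: sum_product mult_ac)
    then show "est_weight i j * (Xseq \<eta> \<alpha> e i \<omega> * Xseq \<eta> \<alpha> e j \<omega>)
        = (\<Sum>k\<in>{1..n}. \<Sum>l\<in>{1..n}. est_weight i j * coef i k * coef j l * (e k \<omega> * e l \<omega>))"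
      by (simp add: sum_distrib_left mult_ac)
  qed
  also have "\<dots> = (\<Sum>k\<in>{1..n}. \<Sum>l\<in>{1..n}. \<Sum>i\<in>{1..n}. \<Sum>j\<in>{1..n}.
          est_weight i j * coef i k * coef j l * (e k \<omega> * e l \<omega>))"
    by (rule sum_sum_swap_pairs)
  also have "(1 / real n) * \<dots> = (\<Sum>k\<in>{1..n}. \<Sum>l\<in>{1..n}. est_matrix n k l * (e k \<omega> * e l \<omega>))"
    unfolding est_matrix_def by (simp add: sum_distrib_left sum_distrib_right mult_ac)
  finally show ?thesis .
qed

definition mean_coef :: "nat \<Rightarrow> nat \<Rightarrow> real" where
  "mean_coef n k = sqrt (real n) / real n * (\<Sum>i\<in>{1..n}. coef i k)"

lemma scaled_Xbar_eq_linear_form: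
  "sqrt (real n) * Xbar \<eta> \<alpha> e n \<omega> = (\<Sum>k\<in>{1..n}. mean_coef n k * e k \<omega>)"
proof -
  have "(\<Sum>i\<in>{1..n}. Xseq \<eta> \<alpha> e i \<omega>) = (\<Sum>i\<in>{1..n}. \<Sum>k\<in>{1..n}. coef i k * e k \<omega>)"
    by (intro sum.cong refl Xseq_eq_sum_coef_upto) simp
  also have "\<dots> = (\<Sum>k\<in>{1..n}. \<Sum>i\<in>{1..n}. coef i k * e k \<omega>)"
    by (rule sum.swap)
  finally show ?thesis unfolding Xbar_def mean_coef_def
    by (simp add: sum_distrib_left sum_distrib_right mult_ac)
qed

lemma sum_sq_mean_coef:
  "(\<Sum>k\<in>{1..n}. (mean_coef n k)\<^sup>2) = (1 / real n) * (\<Sum>i\<in>{1..n}. \<Sum>j\<in>{1..n}. gram n i j)"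
proof -
  have "(mean_coef n k)\<^sup>2 = (1 / real n) * (\<Sum>i\<in>{1..n}. \<Sum>j\<in>{1..n}. coef i k * coef j k)" for k
  proof -
    have "(mean_coef n k)\<^sup>2 = (sqrt (real n) / real n)\<^sup>2 * (\<Sum>i\<in>{1..n}. coef i k)\<^sup>2"
      by (simp only: mean_coef_def power_mult_distrib)
    also have "(sqrt (real n) / real n)\<^sup>2 = 1 / real n"
      by (cases "n = 0") (simp_all add: power_divide power2_eq_square)
    also have "(\<Sum>i\<in>{1..n}. coef i k)\<^sup>2 = (\<Sum>i\<in>{1..n}. \<Sum>j\<in>{1..n}. coef i k * coef j k)"
      by (simp add: power2_eq_square sum_product)
    finally show ?thesis .
  qed
  then have "(\<Sum>k\<in>{1..n}. (mean_coef n k)\<^sup>2)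
      = (1 / real n) * (\<Sum>k\<in>{1..n}. \<Sum>i\<in>{1..n}. \<Sum>j\<in>{1..n}. coef i k * coef j k)"
    by (simp add: sum_distrib_left)
  also have "(\<Sum>k\<in>{1..n}. \<Sum>i\<in>{1..n}. \<Sum>j\<in>{1..n}. coef i k * coef j k)
      = (\<Sum>i\<in>{1..n}. \<Sum>j\<in>{1..n}. \<Sum>k\<in>{1..n}. coef i k * coef j k)"
    by (subst sum.swap, intro sum.cong refl sum.swap)
  finally show ?thesis unfolding gram_def .
qed

lemma trace_est_matrix:
  "(\<Sum>k\<in>{1..n}. est_matrix n k k) = (1 / real n) * (\<Sum>i\<in>{1..n}. \<Sum>j\<in>{1..n}. est_weight i j * gram n i j)"
proof -
  have "(\<Sum>k\<in>{1..n}. est_matrix n k k)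
      = (1 / real n) * (\<Sum>k\<in>{1..n}. \<Sum>i\<in>{1..n}. \<Sum>j\<in>{1..n}. est_weight i j * coef i k * coef j k)"
    unfolding est_matrix_def by (simp add: sum_distrib_left)
  also have "(\<Sum>k\<in>{1..n}. \<Sum>i\<in>{1..n}. \<Sum>j\<in>{1..n}. est_weight i j * coef i k * coef j k)
      = (\<Sum>i\<in>{1..n}. \<Sum>j\<in>{1..n}. \<Sum>k\<in>{1..n}. est_weight i j * coef i k * coef j k)"
    by (subst sum.swap, intro sum.cong refl sum.swap)
  also have "\<dots> = (\<Sum>i\<in>{1..n}. \<Sum>j\<in>{1..n}. est_weight i j * gram n i j)"
    unfolding gram_def by (simp add: sum_distrib_left mult.assoc)
  finally show ?thesis .
qed

lemma abs_trace_est_matrix_minus_sum_sq_mean_coef_le: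
  assumes "1 \<le> n"
  shows "\<bar>(\<Sum>k\<in>{1..n}. est_matrix n k k) - (\<Sum>k\<in>{1..n}. (mean_coef n k)\<^sup>2)\<bar>
    \<le> bias_const * real n powr (\<alpha> - 1)"
proof -
  have "(\<Sum>k\<in>{1..n}. est_matrix n k k) - (\<Sum>k\<in>{1..n}. (mean_coef n k)\<^sup>2)
      = (1 / real n) * (\<Sum>i\<in>{1..n}. \<Sum>j\<in>{1..n}. (est_weight i j - 1) * gram n i j)"
    unfolding trace_est_matrix sum_sq_mean_coef
    by (simp add: sum_subtractf left_diff_distrib right_diff_distrib)
  also have "\<bar>\<dots>\<bar> \<le> (1 / real n) * (bias_const * real n powr \<alpha>)"
    using abs_sum_est_weight_gram_le[of n] by (simp add: abs_mult divide_right_mono)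
  also have "\<dots> = bias_const * real n powr (\<alpha> - 1)"
    using assms by (simp add: powr_diff)
  finally show ?thesis .
qed

end

section \<open>Moments of quadratic forms in i.i.d. noise\<close>

locale iid_noise = prob_space M for M :: "'a measure" +
  fixes e :: "nat \<Rightarrow> 'a \<Rightarrow> real"
  assumes e_measurable: "\<And>i. i \<ge> 1 \<Longrightarrow> e i \<in> borel_measurable M"
    and e_indep: "indep_vars (\<lambda>_. borel) e {1..}"
    and e_distr: "\<And>i. i \<ge> 1 \<Longrightarrow> distr M borel (e i) = distr M borel (e 1)"
    and e_centered: "\<And>i. i \<ge> 1 \<Longrightarrow> integrable M (e i) \<and> expectation (e i) = 0"
    and e_fourth_moment: "integrable M (\<lambda>\<omega>. (e 1 \<omega>) ^ 4)"
begin

definition moment :: "nat \<Rightarrow> real" where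
  "moment m = expectation (\<lambda>\<omega>. (e 1 \<omega>) ^ m)"

lemma moment_0: "moment 0 = 1"
  by (simp add: moment_def prob_space)

lemma moment_1: "moment 1 = 0"
  using e_centered[of 1] by (simp add: moment_def)

lemma integrable_power:
  assumes "1 \<le> i" "m \<le> 4"
  shows "integrable M (\<lambda>\<omega>. (e i \<omega>) ^ m)"
proof -
  have "integrable M (\<lambda>\<omega>. (e 1 \<omega>) ^ m)"
  proof (rule Bochner_Integration.integrable_bound)
    show "integrable M (\<lambda>\<omega>. 1 + (e 1 \<omega>) ^ 4)"
      using e_fourth_moment by simp
    show "(\<lambda>\<omega>. (e 1 \<omega>) ^ m) \<in> borel_measurable M"
      using e_measurable[of 1] by measurable
    show "AE \<omega> in M. norm ((e 1 \<omega>) ^ m) \<le> norm (1 + (e 1 \<omega>) ^ 4)"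
      using abs_power_le_one_plus_power4[OF assms(2)] by (auto intro!: AE_I2 order_trans[OF _ abs_ge_self])
  qed
  moreover have "integrable M (\<lambda>\<omega>. (e i \<omega>) ^ m) = integrable (distr M borel (e i)) (\<lambda>x. x ^ m)"
    by (rule integrable_distr_eq[symmetric]) (use e_measurable[OF assms(1)] in auto)
  moreover have "\<dots> = integrable (distr M borel (e 1)) (\<lambda>x. x ^ m)"
    using e_distr[OF assms(1)] by simp
  moreover have "\<dots> = integrable M (\<lambda>\<omega>. (e 1 \<omega>) ^ m)"
    by (rule integrable_distr_eq) (use e_measurable[of 1] in auto)
  ultimately show ?thesis by simp
qed

lemma expectation_power: "1 \<le> i \<Longrightarrow> expectation (\<lambda>\<omega>. (e i \<omega>) ^ m) = moment m"
proof -
  assume i: "1 \<le> i"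
  have "expectation (\<lambda>\<omega>. (e i \<omega>) ^ m) = integral\<^sup>L (distr M borel (e i)) (\<lambda>x. x ^ m)"
    by (rule integral_distr[symmetric]) (use e_measurable[OF i] in auto)
  also have "\<dots> = integral\<^sup>L (distr M borel (e 1)) (\<lambda>x. x ^ m)"
    using e_distr[OF i] by simp
  also have "\<dots> = moment m" unfolding moment_def
    by (rule integral_distr) (use e_measurable[of 1] in auto)
  finally show ?thesis .
qed

lemma prod_powers:
  assumes I: "finite I" "\<And>i. i \<in> I \<Longrightarrow> 1 \<le> i" and m: "\<And>i. i \<in> I \<Longrightarrow> m i \<le> 4"
  shows "integrable M (\<lambda>\<omega>. \<Prod>i\<in>I. (e i \<omega>) ^ m i)"
    and "expectation (\<lambda>\<omega>. \<Prod>i\<in>I. (e i \<omega>) ^ m i) = (\<Prod>i\<in>I. moment (m i))"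
proof -
  have indep: "indep_vars (\<lambda>_. borel) (\<lambda>i \<omega>. (e i \<omega>) ^ m i) I"
    using I by (intro indep_vars_compose2[OF indep_vars_subset[OF e_indep]]) auto
  have int: "\<And>i. i \<in> I \<Longrightarrow> integrable M (\<lambda>\<omega>. (e i \<omega>) ^ m i)"
    using integrable_power I m by auto
  show "integrable M (\<lambda>\<omega>. \<Prod>i\<in>I. (e i \<omega>) ^ m i)"
    by (rule indep_vars_integrable[OF I(1) indep int])
  have "expectation (\<lambda>\<omega>. \<Prod>i\<in>I. (e i \<omega>) ^ m i) = (\<Prod>i\<in>I. expectation (\<lambda>\<omega>. (e i \<omega>) ^ m i))"
    by (rule indep_vars_lebesgue_integral[OF I(1) indep int])
  also have "\<dots> = (\<Prod>i\<in>I. moment (m i))"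
    using I by (intro prod.cong refl expectation_power) auto
  finally show "expectation (\<lambda>\<omega>. \<Prod>i\<in>I. (e i \<omega>) ^ m i) = (\<Prod>i\<in>I. moment (m i))" .
qed

lemma mixed_moment2:
  assumes "1 \<le> k" "1 \<le> l"
  shows "integrable M (\<lambda>\<omega>. e k \<omega> * e l \<omega>)"
    and "expectation (\<lambda>\<omega>. e k \<omega> * e l \<omega>) = moment 2 * of_bool (k = l)"
proof -
  have "integrable M (\<lambda>\<omega>. e k \<omega> * e l \<omega>)
    \<and> expectation (\<lambda>\<omega>. e k \<omega> * e l \<omega>) = moment 2 * of_bool (k = l)"
  proof (cases "k = l")
    case True
    then show ?thesis
      using integrable_power[of k 2] expectation_power[of k 2] assms by (simp add: power2_eq_square)
  next
    case False
    have "(\<lambda>\<omega>. e k \<omega> * e l \<omega>) = (\<lambda>\<omega>. \<Prod>i\<in>{k, l}. (e i \<omega>) ^ 1)"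
      using False by auto
    moreover have "(\<Prod>i\<in>{k, l}. moment 1) = 0"
      using False moment_1 by simp
    ultimately show ?thesis using prod_powers[of "{k, l}" "\<lambda>_. 1"] assms False by auto
  qed
  then show "integrable M (\<lambda>\<omega>. e k \<omega> * e l \<omega>)"
    and "expectation (\<lambda>\<omega>. e k \<omega> * e l \<omega>) = moment 2 * of_bool (k = l)"
    by simp_all
qed

text \<open>Independence reduces a fourth mixed moment to a product of moments of \<open>e 1\<close>, one for
  each distinct index with its multiplicity; since \<open>moment 1 = 0\<close>, only the pairings survive.\<close>

lemma mixed_moment4:
  assumes "1 \<le> k" "1 \<le> l" "1 \<le> k'" "1 \<le> l'"
  shows "integrable M (\<lambda>\<omega>. e k \<omega> * e l \<omega> * e k' \<omega> * e l' \<omega>)"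
    and "expectation (\<lambda>\<omega>. e k \<omega> * e l \<omega> * e k' \<omega> * e l' \<omega>)
       = (moment 2)\<^sup>2 * (of_bool (k = l \<and> k' = l') + of_bool (k = k' \<and> l = l') + of_bool (k = l' \<and> l = k'))
         + (moment 4 - 3 * (moment 2)\<^sup>2) * of_bool (k = l \<and> k = k' \<and> k = l')"
proof -
  define mult_of :: "nat \<Rightarrow> nat"
    where "mult_of i = of_bool (i = k) + of_bool (i = l) + of_bool (i = k') + of_bool (i = l')" for i
  have eq: "(\<lambda>\<omega>. e k \<omega> * e l \<omega> * e k' \<omega> * e l' \<omega>)
      = (\<lambda>\<omega>. \<Prod>i\<in>{k, l, k', l'}. (e i \<omega>) ^ mult_of i)"
    unfolding mult_of_def by (rule ext) (rule prod4_eq_prod_multiplicity)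
  have I: "finite {k, l, k', l'}" "\<And>i. i \<in> {k, l, k', l'} \<Longrightarrow> 1 \<le> i" "\<And>i. mult_of i \<le> 4"
    using assms by (auto simp: mult_of_def)
  show "integrable M (\<lambda>\<omega>. e k \<omega> * e l \<omega> * e k' \<omega> * e l' \<omega>)"
    unfolding eq using I by (intro prod_powers(1)) auto
  have "expectation (\<lambda>\<omega>. e k \<omega> * e l \<omega> * e k' \<omega> * e l' \<omega>) = (\<Prod>i\<in>{k, l, k', l'}. moment (mult_of i))"
    unfolding eq using I by (intro prod_powers(2)) auto
  also have "\<dots> = (moment 2)\<^sup>2 * (of_bool (k = l \<and> k' = l') + of_bool (k = k' \<and> l = l') + of_bool (k = l' \<and> l = k'))
         + (moment 4 - 3 * (moment 2)\<^sup>2) * of_bool (k = l \<and> k = k' \<and> k = l')"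
    unfolding mult_of_def by (rule prod_multiplicity_centered_moments[OF moment_0 moment_1])
  finally show "expectation (\<lambda>\<omega>. e k \<omega> * e l \<omega> * e k' \<omega> * e l' \<omega>)
       = (moment 2)\<^sup>2 * (of_bool (k = l \<and> k' = l') + of_bool (k = k' \<and> l = l') + of_bool (k = l' \<and> l = k'))
         + (moment 4 - 3 * (moment 2)\<^sup>2) * of_bool (k = l \<and> k = k' \<and> k = l')" .
qed

lemma scaled_mixed_moment4:
  assumes "1 \<le> k" "1 \<le> l" "1 \<le> k'" "1 \<le> l'"
  shows "c * expectation (\<lambda>\<omega>. e k \<omega> * e l \<omega> * e k' \<omega> * e l' \<omega>)
    = (moment 2)\<^sup>2 * (c * of_bool (k = l \<and> k' = l')) + (moment 2)\<^sup>2 * (c * of_bool (k = k' \<and> l = l'))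
      + (moment 2)\<^sup>2 * (c * of_bool (k = l' \<and> l = k'))
      + (moment 4 - 3 * (moment 2)\<^sup>2) * (c * of_bool (k = l \<and> k = k' \<and> k = l'))"
proof -
  have distrib: "c * (X * (a + b + d) + Y * f) = X * (c * a) + X * (c * b) + X * (c * d) + Y * (c * f)"
    for X Y a b d f :: real
    by (simp add: algebra_simps)
  show ?thesis
    unfolding mixed_moment4(2)[OF assms] by (rule distrib)
qed

definition quad_form :: "(nat \<Rightarrow> nat \<Rightarrow> real) \<Rightarrow> nat set \<Rightarrow> 'a \<Rightarrow> real" where
  "quad_form q A \<omega> = (\<Sum>k\<in>A. \<Sum>l\<in>A. q k l * (e k \<omega> * e l \<omega>))"

definition moment_const :: real where
  "moment_const = 2 * (moment 2)\<^sup>2 + \<bar>moment 4 - 3 * (moment 2)\<^sup>2\<bar>"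

lemma moment_const_nonneg: "0 \<le> moment_const"
  unfolding moment_const_def by simp

context
  fixes q :: "nat \<Rightarrow> nat \<Rightarrow> real" and A :: "nat set"
  assumes A: "finite A" "\<And>k. k \<in> A \<Longrightarrow> 1 \<le> k"
begin

lemma integrable_quad_form: "integrable M (quad_form q A)"
  unfolding quad_form_def using A mixed_moment2(1) by auto

lemma expectation_quad_form: "expectation (quad_form q A) = moment 2 * (\<Sum>k\<in>A. q k k)"
proof -
  have "expectation (quad_form q A) = (\<Sum>k\<in>A. \<Sum>l\<in>A. q k l * expectation (\<lambda>\<omega>. e k \<omega> * e l \<omega>))"
    unfolding quad_form_def using A mixed_moment2(1)
    by (simp add: Bochner_Integration.integral_sum)
  also have "\<dots> = (\<Sum>k\<in>A. \<Sum>l\<in>A. of_bool (k = l) * (moment 2 * q k l))"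
    using A by (intro sum.cong refl) (simp add: mixed_moment2(2))
  also have "\<dots> = moment 2 * (\<Sum>k\<in>A. q k k)"
    by (simp add: sum_of_bool_diag[OF A(1)] sum_distrib_left)
  finally show ?thesis .
qed

lemma quad_form_sq:
  "(quad_form q A \<omega>)\<^sup>2
     = (\<Sum>k\<in>A. \<Sum>l\<in>A. \<Sum>k'\<in>A. \<Sum>l'\<in>A. q k l * q k' l' * (e k \<omega> * e l \<omega> * e k' \<omega> * e l' \<omega>))"
  unfolding quad_form_def power2_eq_square sum_distrib_right sum_distrib_left
  by (simp only: mult_ac)

lemma integrable_quad_form_sq: "integrable M (\<lambda>\<omega>. (quad_form q A \<omega>)\<^sup>2)"
  unfolding quad_form_sq using A mixed_moment4(1) by auto

lemma expectation_quad_form_sq: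
  "expectation (\<lambda>\<omega>. (quad_form q A \<omega>)\<^sup>2)
     = (moment 2)\<^sup>2 * ((\<Sum>k\<in>A. q k k)\<^sup>2 + (\<Sum>k\<in>A. \<Sum>l\<in>A. (q k l)\<^sup>2) + (\<Sum>k\<in>A. \<Sum>l\<in>A. q k l * q l k))
       + (moment 4 - 3 * (moment 2)\<^sup>2) * (\<Sum>k\<in>A. (q k k)\<^sup>2)"
proof -
  have "expectation (\<lambda>\<omega>. (quad_form q A \<omega>)\<^sup>2)
     = (\<Sum>k\<in>A. \<Sum>l\<in>A. \<Sum>k'\<in>A. \<Sum>l'\<in>A.
          q k l * q k' l' * expectation (\<lambda>\<omega>. e k \<omega> * e l \<omega> * e k' \<omega> * e l' \<omega>))"
    unfolding quad_form_sq using A mixed_moment4(1)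
    by (simp add: Bochner_Integration.integral_sum)
  also have "\<dots> = (\<Sum>k\<in>A. \<Sum>l\<in>A. \<Sum>k'\<in>A. \<Sum>l'\<in>A.
          (moment 2)\<^sup>2 * (q k l * q k' l' * of_bool (k = l \<and> k' = l'))
        + (moment 2)\<^sup>2 * (q k l * q k' l' * of_bool (k = k' \<and> l = l'))
        + (moment 2)\<^sup>2 * (q k l * q k' l' * of_bool (k = l' \<and> l = k'))
        + (moment 4 - 3 * (moment 2)\<^sup>2) * (q k l * q k' l' * of_bool (k = l \<and> k = k' \<and> k = l')))"
    by (intro sum.cong refl scaled_mixed_moment4) (use A(2) in auto)
  also have "\<dots> = (moment 2)\<^sup>2 * (\<Sum>k\<in>A. \<Sum>l\<in>A. \<Sum>k'\<in>A. \<Sum>l'\<in>A. q k l * q k' l' * of_bool (k = l \<and> k' = l'))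
     + (moment 2)\<^sup>2 * (\<Sum>k\<in>A. \<Sum>l\<in>A. \<Sum>k'\<in>A. \<Sum>l'\<in>A. q k l * q k' l' * of_bool (k = k' \<and> l = l'))
     + (moment 2)\<^sup>2 * (\<Sum>k\<in>A. \<Sum>l\<in>A. \<Sum>k'\<in>A. \<Sum>l'\<in>A. q k l * q k' l' * of_bool (k = l' \<and> l = k'))
     + (moment 4 - 3 * (moment 2)\<^sup>2)
       * (\<Sum>k\<in>A. \<Sum>l\<in>A. \<Sum>k'\<in>A. \<Sum>l'\<in>A. q k l * q k' l' * of_bool (k = l \<and> k = k' \<and> k = l'))"
    by (simp only: sum.distrib sum_distrib_left[symmetric])
  also have "\<dots> = (moment 2)\<^sup>2 *
      ((\<Sum>k\<in>A. q k k)\<^sup>2 + (\<Sum>k\<in>A. \<Sum>l\<in>A. (q k l)\<^sup>2) + (\<Sum>k\<in>A. \<Sum>l\<in>A. q k l * q l k))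
       + (moment 4 - 3 * (moment 2)\<^sup>2) * (\<Sum>k\<in>A. (q k k)\<^sup>2)"
    unfolding sum_pairing_trace_sq[OF A(1)] sum_pairing_frobenius[OF A(1)]
      sum_pairing_transpose[OF A(1)] sum_pairing_diag[OF A(1)]
    by (simp add: algebra_simps)
  finally show ?thesis .
qed

lemma mse_quad_form_le:
  shows "integrable M (\<lambda>\<omega>. (quad_form q A \<omega> - c)\<^sup>2)"
    and "expectation (\<lambda>\<omega>. (quad_form q A \<omega> - c)\<^sup>2)
      \<le> (moment 2 * (\<Sum>k\<in>A. q k k) - c)\<^sup>2 + moment_const * (\<Sum>k\<in>A. \<Sum>l\<in>A. (q k l)\<^sup>2)"
proof -
  have sq: "(\<lambda>\<omega>. (quad_form q A \<omega> - c)\<^sup>2)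
      = (\<lambda>\<omega>. ((quad_form q A \<omega>)\<^sup>2 + c\<^sup>2) - 2 * c * quad_form q A \<omega>)"
    by (simp add: power2_diff algebra_simps)
  show "integrable M (\<lambda>\<omega>. (quad_form q A \<omega> - c)\<^sup>2)"
    unfolding sq using integrable_quad_form_sq integrable_quad_form by simp
  define F where "F = (\<Sum>k\<in>A. \<Sum>l\<in>A. (q k l)\<^sup>2)"
  have transpose: "(\<Sum>k\<in>A. \<Sum>l\<in>A. q k l * q l k) \<le> F"
    unfolding F_def by (rule sum_mult_transpose_le_sum_squares)
  have "(moment 4 - 3 * (moment 2)\<^sup>2) * (\<Sum>k\<in>A. (q k k)\<^sup>2)
      \<le> \<bar>moment 4 - 3 * (moment 2)\<^sup>2\<bar> * (\<Sum>k\<in>A. (q k k)\<^sup>2)"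
    by (intro mult_right_mono) (auto intro: sum_nonneg)
  also have "\<dots> \<le> \<bar>moment 4 - 3 * (moment 2)\<^sup>2\<bar> * F"
    unfolding F_def by (intro mult_left_mono sum_diag_squares_le_sum_squares A(1)) simp
  finally have diag: "(moment 4 - 3 * (moment 2)\<^sup>2) * (\<Sum>k\<in>A. (q k k)\<^sup>2)
      \<le> \<bar>moment 4 - 3 * (moment 2)\<^sup>2\<bar> * F" .
  have "expectation (\<lambda>\<omega>. (quad_form q A \<omega> - c)\<^sup>2)
      = expectation (\<lambda>\<omega>. (quad_form q A \<omega>)\<^sup>2) + c\<^sup>2 - 2 * c * expectation (quad_form q A)"
    unfolding sq using integrable_quad_form_sq integrable_quad_form by (simp add: prob_space)
  also have "\<dots> = (moment 2 * (\<Sum>k\<in>A. q k k) - c)\<^sup>2 + (moment 2)\<^sup>2 * (F + (\<Sum>k\<in>A. \<Sum>l\<in>A. q k l * q l k))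
      + (moment 4 - 3 * (moment 2)\<^sup>2) * (\<Sum>k\<in>A. (q k k)\<^sup>2)"
    unfolding expectation_quad_form_sq expectation_quad_form F_def by (simp add: power2_eq_square algebra_simps)
  also have "\<dots> \<le> (moment 2 * (\<Sum>k\<in>A. q k k) - c)\<^sup>2 + (moment 2)\<^sup>2 * (F + F)
      + \<bar>moment 4 - 3 * (moment 2)\<^sup>2\<bar> * F"
    using transpose by (intro add_mono[OF add_mono[OF order_refl mult_left_mono] diag]) auto
  also have "\<dots> = (moment 2 * (\<Sum>k\<in>A. q k k) - c)\<^sup>2 + moment_const * F"
    unfolding moment_const_def by (simp add: algebra_simps)
  finally show "expectation (\<lambda>\<omega>. (quad_form q A \<omega> - c)\<^sup>2)
      \<le> (moment 2 * (\<Sum>k\<in>A. q k k) - c)\<^sup>2 + moment_const * (\<Sum>k\<in>A. \<Sum>l\<in>A. (q k l)\<^sup>2)"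
    unfolding F_def .
qed

end

lemma variance_linear_form:
  assumes "finite A" "\<And>k. k \<in> A \<Longrightarrow> 1 \<le> k"
  shows "variance (\<lambda>\<omega>. \<Sum>k\<in>A. v k * e k \<omega>) = moment 2 * (\<Sum>k\<in>A. (v k)\<^sup>2)"
proof -
  have "expectation (\<lambda>\<omega>. \<Sum>k\<in>A. v k * e k \<omega>) = 0"
    using assms e_centered by (simp add: Bochner_Integration.integral_sum)
  moreover have "(\<Sum>k\<in>A. v k * e k \<omega>)\<^sup>2 = quad_form (\<lambda>k l. v k * v l) A \<omega>" for \<omega>
    unfolding quad_form_def power2_eq_square sum_product by (simp only: mult_ac)
  ultimately have "variance (\<lambda>\<omega>. \<Sum>k\<in>A. v k * e k \<omega>) = expectation (quad_form (\<lambda>k l. v k * v l) A)"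
    by simp
  also have "\<dots> = moment 2 * (\<Sum>k\<in>A. (v k)\<^sup>2)"
    using assms by (simp add: expectation_quad_form power2_eq_square)
  finally show ?thesis .
qed

end

section \<open>The mean squared error of the batch-means estimator\<close>

locale sgd_iid = sgd_schedule \<eta> \<alpha> C + iid_noise M e
  for \<eta> \<alpha> C :: real and M :: "'a measure" and e :: "nat \<Rightarrow> 'a \<Rightarrow> real"
begin

lemma sigma_hat_eq_quad_form: "sigma_hat \<eta> \<alpha> C e n = quad_form (est_matrix n) {1..n}"
  by (simp add: sigma_hat_eq_sum_est_matrix quad_form_def fun_eq_iff)

lemma variance_scaled_Xbar:
  "variance (\<lambda>\<omega>. sqrt (real n) * Xbar \<eta> \<alpha> e n \<omega>) = moment 2 * (\<Sum>k\<in>{1..n}. (mean_coef n k)\<^sup>2)"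
  unfolding scaled_Xbar_eq_linear_form by (rule variance_linear_form) auto

lemma mse_sigma_hat_le:
  assumes n: "1 \<le> n"
  defines "\<sigma> \<equiv> variance (\<lambda>\<omega>. sqrt (real n) * Xbar \<eta> \<alpha> e n \<omega>)"
  shows "integrable M (\<lambda>\<omega>. (sigma_hat \<eta> \<alpha> C e n \<omega> - \<sigma>)\<^sup>2)"
    and "expectation (\<lambda>\<omega>. (sigma_hat \<eta> \<alpha> C e n \<omega> - \<sigma>)\<^sup>2)
      \<le> (moment 2 * bias_const)\<^sup>2 * (real n powr (\<alpha> - 1))\<^sup>2
        + moment_const * frob_const * (1 / real n + C * real n powr (\<alpha> - 1) * ln (real n))"
proof -
  have A: "finite {1..n}" "\<And>k. k \<in> {1..n} \<Longrightarrow> 1 \<le> k" by auto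
  note mse = mse_quad_form_le[OF A, of "est_matrix n" \<sigma>, folded sigma_hat_eq_quad_form]
  show "integrable M (\<lambda>\<omega>. (sigma_hat \<eta> \<alpha> C e n \<omega> - \<sigma>)\<^sup>2)"
    by (rule mse(1))
  have "\<bar>moment 2 * (\<Sum>k\<in>{1..n}. est_matrix n k k) - \<sigma>\<bar>
      = \<bar>moment 2\<bar> * \<bar>(\<Sum>k\<in>{1..n}. est_matrix n k k) - (\<Sum>k\<in>{1..n}. (mean_coef n k)\<^sup>2)\<bar>"
    unfolding \<sigma>_def variance_scaled_Xbar by (simp add: abs_mult[symmetric] right_diff_distrib)
  also have "\<dots> \<le> \<bar>moment 2\<bar> * (bias_const * real n powr (\<alpha> - 1))"
    by (intro mult_left_mono abs_trace_est_matrix_minus_sum_sq_mean_coef_le n) simp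
  finally have "\<bar>moment 2 * (\<Sum>k\<in>{1..n}. est_matrix n k k) - \<sigma>\<bar>\<^sup>2
      \<le> (\<bar>moment 2\<bar> * (bias_const * real n powr (\<alpha> - 1)))\<^sup>2"
    by (rule power_mono) simp
  then have "(moment 2 * (\<Sum>k\<in>{1..n}. est_matrix n k k) - \<sigma>)\<^sup>2
      \<le> (moment 2 * bias_const)\<^sup>2 * (real n powr (\<alpha> - 1))\<^sup>2"
    by (simp add: power_mult_distrib)
  moreover have "moment_const * (\<Sum>k\<in>{1..n}. \<Sum>l\<in>{1..n}. (est_matrix n k l)\<^sup>2)
      \<le> moment_const * (frob_const * (1 / real n + C * real n powr (\<alpha> - 1) * ln (real n)))"
    by (intro mult_left_mono sum_sq_est_matrix_le n moment_const_nonneg)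
  ultimately show "expectation (\<lambda>\<omega>. (sigma_hat \<eta> \<alpha> C e n \<omega> - \<sigma>)\<^sup>2)
      \<le> (moment 2 * bias_const)\<^sup>2 * (real n powr (\<alpha> - 1))\<^sup>2
        + moment_const * frob_const * (1 / real n + C * real n powr (\<alpha> - 1) * ln (real n))"
    using mse(2) unfolding mult.assoc by linarith
qed

end

theorem corollaryC1:
  fixes M :: "'a measure" and e :: "nat \<Rightarrow> 'a \<Rightarrow> real"
    and \<eta> \<alpha> C :: real
  assumes "prob_space M"
    and "\<eta> > 0" and "1/2 < \<alpha>" and "\<alpha> < 1" and "\<eta> * C > 1"
    and "\<And>i. i \<ge> 1 \<Longrightarrow> e i \<in> borel_measurable M"
    and "prob_space.indep_vars M (\<lambda>_. borel) e {1..}"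
    and "\<And>i. i \<ge> 1 \<Longrightarrow> distr M borel (e i) = distr M borel (e 1)"
    and "\<And>i. i \<ge> 1 \<Longrightarrow> integrable M (e i) \<and> prob_space.expectation M (e i) = 0"
    and "integrable M (\<lambda>\<omega>. (e 1 \<omega>) ^ 4)"
  shows "\<exists>K. \<forall>n\<ge>2.
           integrable M (\<lambda>\<omega>. (sigma_hat \<eta> \<alpha> C e n \<omega>
               - prob_space.variance M (\<lambda>\<omega>. sqrt (real n) * Xbar \<eta> \<alpha> e n \<omega>))\<^sup>2)
         \<and> prob_space.expectation M (\<lambda>\<omega>. (sigma_hat \<eta> \<alpha> C e n \<omega>
               - prob_space.variance M (\<lambda>\<omega>. sqrt (real n) * Xbar \<eta> \<alpha> e n \<omega>))\<^sup>2)
             \<le> K * real n powr (\<alpha> - 1) * ln (real n)"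
proof -
  interpret sgd_iid \<eta> \<alpha> C M e
    using sgd_schedule.intro[OF assms(2-5)]
      iid_noise.intro[OF assms(1) iid_noise_axioms.intro[OF assms(6-10)]]
    by (rule sgd_iid.intro)
  define B where "B = (moment 2 * bias_const)\<^sup>2"
  define F where "F = moment_const * frob_const"
  have BF: "0 \<le> B" "0 \<le> F"
    unfolding B_def F_def frob_const_def using moment_const_nonneg by simp_all
  show ?thesis
  proof (intro exI allI impI conjI)
    fix n :: nat assume n: "2 \<le> n"
    define R where "R = real n powr (\<alpha> - 1) * ln (real n) / ln 2"
    have rate: "(real n powr (\<alpha> - 1))\<^sup>2 \<le> R" "1 / real n \<le> R"
      unfolding R_def using rate_terms_le[OF n] alpha_gt_half alpha_lt_one by auto
    show "integrable M (\<lambda>\<omega>. (sigma_hat \<eta> \<alpha> C e n \<omega>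
        - variance (\<lambda>\<omega>. sqrt (real n) * Xbar \<eta> \<alpha> e n \<omega>))\<^sup>2)"
      using mse_sigma_hat_le(1) n by simp
    have "expectation (\<lambda>\<omega>. (sigma_hat \<eta> \<alpha> C e n \<omega>
        - variance (\<lambda>\<omega>. sqrt (real n) * Xbar \<eta> \<alpha> e n \<omega>))\<^sup>2)
      \<le> B * (real n powr (\<alpha> - 1))\<^sup>2 + F * (1 / real n + C * real n powr (\<alpha> - 1) * ln (real n))"
      unfolding B_def F_def using mse_sigma_hat_le(2) n by simp
    also have "\<dots> \<le> B * R + F * (R + C * real n powr (\<alpha> - 1) * ln (real n))"
      using rate BF by (intro add_mono mult_left_mono order_refl) auto
    also have "\<dots> = ((B + F) / ln 2 + F * C) * real n powr (\<alpha> - 1) * ln (real n)"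
      unfolding R_def by (simp add: field_simps)
    finally show "expectation (\<lambda>\<omega>. (sigma_hat \<eta> \<alpha> C e n \<omega>
        - variance (\<lambda>\<omega>. sqrt (real n) * Xbar \<eta> \<alpha> e n \<omega>))\<^sup>2)
      \<le> ((B + F) / ln 2 + F * C) * real n powr (\<alpha> - 1) * ln (real n)" .
  qed
qed

end
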